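(* Let $A=(S^c)_{sa}$ be the self-adjoint part of $S^c$, regarded as an order unit space with order unit the identity $I$. Define $L:A\to\mathbb R_+$ by $$L(\phi)=\max_{i=1,2,3}\|\delta_i(\phi)\|_{\infty,\infty,1}.$$ Then $L$ is a Lip norm on $A$, that is: (i) $L(\phi)=0$ if and only if $\phi\in\mathbb R I$; (ii) the metric $\rho_L(\omega_1,\omega_2)=\sup\{|\omega_1(a)-\omega_2(a)|: a\in A,\ L(a)\le1\}$ on the state space $S(A)$ induces the weak-$*$ topology.
   Context: Let $\mathbb T=\mathbb R/\mathbb Z$ and $e(t)=e^{2\pi it}$. Fix a positive integer $c$ and real numbers $\hbar,\mu,\nu$ with $\mu^2+\nu^2\ne0$. $S^c$ is the space of $C^\infty$ functions $\Phi:\mathbb R\times\mathbb T\times\mathbb Z\to\mathbb C$ satisfying two conditions: (a) $\Phi(x+k,y,p)=e(ckpy)\Phi(x,y,p)$ for all $k\in\mathbb Z$; (b) for every polynomial $P$ on $\mathbb Z$, every $m,n\ge0$ and every compact $K\subset\mathbb R\times\mathbb T$, the function $P(p)\,\partial_x^m\partial_y^n\Phi$ is bounded on $K\times\mathbb Z$. Product and involution on $S^c$: $$(\Phi\star\Psi)(x,y,p)=\sum_{q}\Phi(x-\hbar(q-p)\mu,\,y-\hbar(q-p)\nu,\,q)\,\Psi(x-\hbar q\mu,\,y-\hbar q\nu,\,p-q),$$ $$\Phi^*(x,y,p)=\overline{\Phi(x,y,-p)}.$$ These act faithfully on $L^2(\mathbb R\times\mathbb T\times\mathbb Z)$ via $$(\pi(\Phi)\xi)(x,y,p)=\sum_q\Phi(x-\hbar(q-2p)\mu,\,y-\hbar(q-2p)\nu,\,q)\,\xi(x,y,p-q).$$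 The C*-norm $\|\cdot\|$ on $S^c$ is the operator norm of $\pi(\cdot)$. The identity $I$ is the function $(x,y,p)\mapsto\delta_{p0}$. The order on $A=(S^c)_{sa}$ is the one inherited from the C*-algebra (the norm closure of $\pi(S^c)$), and the norm on $A$ is the C*-norm. An order unit space is a real partially ordered vector space with a distinguished element $e$ satisfying two properties: for every $a$ there is $r\in\mathbb R$ with $a\le re$; and if $a\le re$ for all $r\ge0$, then $a\le0$. A state of $A$ is a bounded linear functional $\omega$ with $\omega(I)=1=\|\omega\|$. $S(A)$ denotes the set of states. The norm $\|\cdot\|_{\infty,\infty,1}$ is defined by $\|\phi\|_{\infty,\infty,1}=\sum_{p\in\mathbb Z}\sup_{x\in\mathbb R,y\in\mathbb T}|\phi(x,y,p)|$. The derivations (induced by the ergodic action of the Heisenberg group) are: $$\delta_1(\phi)(x,y,p)=-\frac{\partial\phi}{\partial x}(x,y,p),$$ $$\delta_2(\phi)(x,y,p)=2\pi i c p x\,\phi(x,y,p)-\frac{\partial\phi}{\partial y}(x,y,p),$$ $$\delta_3(\phi)(x,y,p)=2\pi i p\,\phi(x,y,p).$$ *)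

theory Defs
  imports "HOL-Analysis.Analysis" "HOL-Computational_Algebra.Polynomial"
begin

type_synonym fn3 = "real \<Rightarrow> real \<Rightarrow> int \<Rightarrow> complex"
type_synonym fn2 = "real \<Rightarrow> real \<Rightarrow> complex"

definition ee :: "real \<Rightarrow> complex" where
  "ee t = exp (2 * complex_of_real pi * \<i> * complex_of_real t)"

definition pdx :: "fn2 \<Rightarrow> fn2" where
  "pdx f = (\<lambda>x y. vector_derivative (\<lambda>t. f t y) (at x))"
definition pdy :: "fn2 \<Rightarrow> fn2" where
  "pdy f = (\<lambda>x y. vector_derivative (\<lambda>t. f x t) (at y))"

fun iter_pd :: "bool list \<Rightarrow> fn2 \<Rightarrow> fn2" where
  "iter_pd [] f = f"
| "iter_pd (d # ds) f = (if d then pdx else pdy) (iter_pd ds f)"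

definition smooth2 :: "fn2 \<Rightarrow> bool" where
  "smooth2 f \<longleftrightarrow> (\<forall>ds.
      continuous_on UNIV (\<lambda>z. iter_pd ds f (fst z) (snd z)) \<and>
      (\<forall>x y. (\<lambda>t. iter_pd ds f t y) differentiable (at x) \<and>
             (\<lambda>t. iter_pd ds f x t) differentiable (at y)))"

text \<open>The space S^c (functions on R x T x Z, represented as 1-periodic in the second variable).\<close>
definition Sc :: "nat \<Rightarrow> fn3 set" where
  "Sc c = {\<Phi>.
     (\<forall>p. smooth2 (\<lambda>x y. \<Phi> x y p)) \<and>
     (\<forall>x y p. \<Phi> x (y + 1) p = \<Phi> x y p) \<and>
     (\<forall>(k::int) x y p. \<Phi> (x + of_int k) y p = ee (real c * of_int k * of_int p * y) * \<Phi> x y p) \<and>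
     (\<forall>(P::complex poly) m n (K::(real \<times> real) set). compact K \<longrightarrow>
        bounded {poly P (of_int p) * (pdx ^^ m) ((pdy ^^ n) (\<lambda>x y. \<Phi> x y p)) x y
                 | x y p. (x, y) \<in> K})}"

definition star3 :: "fn3 \<Rightarrow> fn3" where
  "star3 \<Phi> = (\<lambda>x y p. cnj (\<Phi> x y (- p)))"

definition Asa :: "nat \<Rightarrow> fn3 set" where
  "Asa c = {\<Phi> \<in> Sc c. star3 \<Phi> = \<Phi>}"

definition unitI :: fn3 where
  "unitI = (\<lambda>x y p. if p = 0 then 1 else 0)"

text \<open>The representation on L^2(R x T x Z) (T realised as [0,1]).\<close>
definition piRep :: "real \<Rightarrow> real \<Rightarrow> real \<Rightarrow> fn3 \<Rightarrow> fn3 \<Rightarrow> fn3" where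
  "piRep hb mu nu \<Phi> \<xi> = (\<lambda>x y p.
     \<Sum>\<^sub>\<infinity>q::int. \<Phi> (x - hb * of_int (q - 2 * p) * mu) (y - hb * of_int (q - 2 * p) * nu) q
                    * \<xi> x y (p - q))"

definition l2nsq :: "fn3 \<Rightarrow> ennreal" where
  "l2nsq \<xi> = (\<integral>\<^sup>+ p. (\<integral>\<^sup>+ z \<in> (UNIV \<times> {0..1}). ennreal ((cmod (\<xi> (fst z) (snd z) p))\<^sup>2) \<partial>lborel)
              \<partial>count_space UNIV)"

definition L2fun :: "fn3 \<Rightarrow> bool" where
  "L2fun \<xi> \<longleftrightarrow> (\<forall>p. (\<lambda>z::real\<times>real. \<xi> (fst z) (snd z) p) \<in> borel_measurable lborel) \<and> l2nsq \<xi> < \<infinity>"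

definition cnorm :: "real \<Rightarrow> real \<Rightarrow> real \<Rightarrow> fn3 \<Rightarrow> real" where
  "cnorm hb mu nu \<Phi> = sqrt (enn2real
     (SUP \<xi> \<in> {\<xi>. L2fun \<xi> \<and> l2nsq \<xi> \<le> 1}. l2nsq (piRep hb mu nu \<Phi> \<xi>)))"

text \<open>States of A: bounded real-linear functionals with omega(I) = 1 = norm omega
  (taken extensional on A so that a state is determined by its values on A).\<close>
definition states :: "nat \<Rightarrow> real \<Rightarrow> real \<Rightarrow> real \<Rightarrow> (fn3 \<Rightarrow> real) set" where
  "states c hb mu nu = {\<omega> \<in> extensional (Asa c).
     (\<forall>a\<in>Asa c. \<forall>b\<in>Asa c. \<omega> (\<lambda>x y p. a x y p + b x y p) = \<omega> a + \<omega> b) \<and>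
     (\<forall>a\<in>Asa c. \<forall>r::real. \<omega> (\<lambda>x y p. complex_of_real r * a x y p) = r * \<omega> a) \<and>
     (\<exists>B. \<forall>a\<in>Asa c. \<bar>\<omega> a\<bar> \<le> B * cnorm hb mu nu a) \<and>
     \<omega> unitI = 1 \<and>
     Sup {\<bar>\<omega> a\<bar> | a. a \<in> Asa c \<and> cnorm hb mu nu a \<le> 1} = 1}"

definition weakstar :: "nat \<Rightarrow> real \<Rightarrow> real \<Rightarrow> real \<Rightarrow> (fn3 \<Rightarrow> real) topology" where
  "weakstar c hb mu nu = subtopology (product_topology (\<lambda>_. euclideanreal) UNIV) (states c hb mu nu)"

definition delta1 :: "fn3 \<Rightarrow> fn3" where
  "delta1 \<phi> = (\<lambda>x y p. - vector_derivative (\<lambda>t. \<phi> t y p) (at x))"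
definition delta2 :: "nat \<Rightarrow> fn3 \<Rightarrow> fn3" where
  "delta2 c \<phi> = (\<lambda>x y p. 2 * complex_of_real pi * \<i> * of_nat c * of_int p * complex_of_real x * \<phi> x y p
                       - vector_derivative (\<lambda>t. \<phi> x t p) (at y))"
definition delta3 :: "fn3 \<Rightarrow> fn3" where
  "delta3 \<phi> = (\<lambda>x y p. 2 * complex_of_real pi * \<i> * of_int p * \<phi> x y p)"

definition norm_ii1 :: "fn3 \<Rightarrow> real" where
  "norm_ii1 \<psi> = (\<Sum>\<^sub>\<infinity>p::int. (SUP z \<in> (UNIV::(real\<times>real) set). cmod (\<psi> (fst z) (snd z) p)))"

definition Lip :: "nat \<Rightarrow> fn3 \<Rightarrow> real" where
  "Lip c \<phi> = max (norm_ii1 (delta1 \<phi>)) (max (norm_ii1 (delta2 c \<phi>)) (norm_ii1 (delta3 \<phi>)))"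

definition rhoL :: "nat \<Rightarrow> (fn3 \<Rightarrow> real) \<Rightarrow> (fn3 \<Rightarrow> real) \<Rightarrow> ereal" where
  "rhoL c \<omega>1 \<omega>2 = Sup {ereal \<bar>\<omega>1 a - \<omega>2 a\<bar> | a. a \<in> Asa c \<and> Lip c a \<le> 1}"

end

theory Submission
  imports Defs "HOL-Library.Periodic_Fun"
begin

text \<open>
  (i) Elements of S^c decay in p faster than any power, so the slice suprema of delta_i phi are
  summable and dominate every value of delta_i phi. Hence L(phi) = 0 forces all delta_i phi to
  vanish: delta3 kills the slices p \<noteq> 0, delta1 and delta2 make the slice p = 0 constant,
  and self-adjointness makes that constant real.

  (ii) By Schur's test the operator norm of pi(Phi) is at most the sum over p of
  sup |Phi(., ., p)|, so states are dominated by the (infinity, infinity, 1)-norm. Rescaling a to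
  L-norm at most 1 gives |omega1 a - omega2 a| \<le> (L a + 1) rho_L(omega1, omega2), so weak-* open
  sets are rho_L-open. Conversely, on {L \<le> 1} the bound on delta3 makes the slices |p| > N small
  in a summable way, while delta1 and delta2 make the slices |p| \<le> N uniformly Lipschitz, hence
  determined up to 1/K by finitely many grid values. Modulo multiples of I the ball {L \<le> 1} is
  therefore totally bounded for the (infinity, infinity, 1)-norm, finitely many evaluations
  control rho_L, and rho_L-balls are weak-* neighbourhoods.
\<close>

section \<open>Linear structure of S^c and A\<close>

lemma vector_derivative_lincomb:
  fixes f g :: "real \<Rightarrow> complex"
  assumes "f differentiable (at x)" and "g differentiable (at x)"
  shows "vector_derivative (\<lambda>t. \<alpha> * f t + \<beta> * g t) (at x)
       = \<alpha> * vector_derivative f (at x) + \<beta> * vector_derivative g (at x)"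
  using assms by simp

lemma iter_pd_lincomb:
  assumes "smooth2 f" and "smooth2 g"
  shows "iter_pd ds (\<lambda>x y. \<alpha> * f x y + \<beta> * g x y)
       = (\<lambda>x y. \<alpha> * iter_pd ds f x y + \<beta> * iter_pd ds g x y)"
proof (induction ds)
  case (Cons d ds)
  have "(\<lambda>t. iter_pd ds f t y) differentiable (at x)" "(\<lambda>t. iter_pd ds f x t) differentiable (at y)"
       "(\<lambda>t. iter_pd ds g t y) differentiable (at x)" "(\<lambda>t. iter_pd ds g x t) differentiable (at y)"
    for x y using assms unfolding smooth2_def by blast+
  with Cons show ?case
    by (cases d) (simp_all add: pdx_def pdy_def vector_derivative_lincomb)
qed simp

lemma smooth2_lincomb:
  assumes "smooth2 f" and "smooth2 g"
  shows "smooth2 (\<lambda>x y. \<alpha> * f x y + \<beta> * g x y)"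
  unfolding smooth2_def iter_pd_lincomb[OF assms]
proof (intro allI conjI)
  fix ds x y
  have "continuous_on UNIV (\<lambda>z. iter_pd ds f (fst z) (snd z))"
       "continuous_on UNIV (\<lambda>z. iter_pd ds g (fst z) (snd z))"
    using assms unfolding smooth2_def by blast+
  then show "continuous_on UNIV
      (\<lambda>z. \<alpha> * iter_pd ds f (fst z) (snd z) + \<beta> * iter_pd ds g (fst z) (snd z))"
    by (intro continuous_intros)
  have "(\<lambda>t. iter_pd ds f t y) differentiable (at x)" "(\<lambda>t. iter_pd ds f x t) differentiable (at y)"
       "(\<lambda>t. iter_pd ds g t y) differentiable (at x)" "(\<lambda>t. iter_pd ds g x t) differentiable (at y)"
    using assms unfolding smooth2_def by blast+
  then show "(\<lambda>t. \<alpha> * iter_pd ds f t y + \<beta> * iter_pd ds g t y) differentiable (at x)"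
    and "(\<lambda>t. \<alpha> * iter_pd ds f x t + \<beta> * iter_pd ds g x t) differentiable (at y)"
    by (auto intro!: derivative_intros)
qed

lemma funpow_pdx_pdy_eq_iter_pd:
  "(pdx ^^ m) ((pdy ^^ n) f) = iter_pd (replicate m True @ replicate n False) f"
proof -
  have pdy: "(pdy ^^ n) f = iter_pd (replicate n False) f"
    by (induction n) auto
  have "(pdx ^^ m) (iter_pd ds f) = iter_pd (replicate m True @ ds) f" for ds
    by (induction m) auto
  then show ?thesis
    by (simp add: pdy)
qed

lemma Sc_smooth: "a \<in> Sc c \<Longrightarrow> smooth2 (\<lambda>x y. a x y p)"
  unfolding Sc_def by blast

lemma Sc_quasi_periodic_x:
  "a \<in> Sc c \<Longrightarrow> a (x + of_int k) y p = ee (real c * of_int k * of_int p * y) * a x y p"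
  unfolding Sc_def by blast

lemma Sc_periodic_y:
  assumes "a \<in> Sc c"
  shows "a x (y + of_int k) p = a x y p"
proof -
  interpret periodic_fun_simple' "\<lambda>y. a x y p"
    by standard (use assms in \<open>simp add: Sc_def\<close>)
  show ?thesis
    using plus_of_int by simp
qed

lemma Sc_bounded:
  "a \<in> Sc c \<Longrightarrow> compact K \<Longrightarrow>
    bounded {poly P (of_int p) * (pdx ^^ m) ((pdy ^^ n) (\<lambda>x y. a x y p)) x y | x y p. (x, y) \<in> K}"
  unfolding Sc_def by blast

lemma Sc_lincomb:
  assumes a: "a \<in> Sc c" and b: "b \<in> Sc c"
  shows "(\<lambda>x y p. \<alpha> * a x y p + \<beta> * b x y p) \<in> Sc c"
  unfolding Sc_def
proof (intro CollectI conjI allI impI)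
  have sa: "smooth2 (\<lambda>x y. a x y p)" and sb: "smooth2 (\<lambda>x y. b x y p)" for p
    using Sc_smooth a b by blast+
  then show "smooth2 (\<lambda>x y. \<alpha> * a x y p + \<beta> * b x y p)" for p
    by (rule smooth2_lincomb)
  show "\<alpha> * a x (y + 1) p + \<beta> * b x (y + 1) p = \<alpha> * a x y p + \<beta> * b x y p" for x y p
    using Sc_periodic_y[OF a, of x y 1] Sc_periodic_y[OF b, of x y 1] by simp
  show "\<alpha> * a (x + of_int k) y p + \<beta> * b (x + of_int k) y p
      = ee (real c * of_int k * of_int p * y) * (\<alpha> * a x y p + \<beta> * b x y p)" for k :: int and x y p
    using Sc_quasi_periodic_x[OF a, where x=x and k=k and y=y and p=p]
      Sc_quasi_periodic_x[OF b, where x=x and k=k and y=y and p=p]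
    by (simp add: algebra_simps)
  fix P :: "complex poly" and m n and K :: "(real \<times> real) set"
  assume K: "compact K"
  obtain A where A: "\<forall>z\<in>{poly P (of_int p) * (pdx ^^ m) ((pdy ^^ n) (\<lambda>x y. a x y p)) x y
      | x y p. (x, y) \<in> K}. norm z \<le> A"
    using Sc_bounded[OF a K] unfolding bounded_iff by blast
  obtain B where B: "\<forall>z\<in>{poly P (of_int p) * (pdx ^^ m) ((pdy ^^ n) (\<lambda>x y. b x y p)) x y
      | x y p. (x, y) \<in> K}. norm z \<le> B"
    using Sc_bounded[OF b K] unfolding bounded_iff by blast
  show "bounded {poly P (of_int p) * (pdx ^^ m) ((pdy ^^ n) (\<lambda>x y. \<alpha> * a x y p + \<beta> * b x y p)) x y
      | x y p. (x, y) \<in> K}"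
    unfolding bounded_iff
  proof (intro exI ballI)
    fix z
    assume "z \<in> {poly P (of_int p) * (pdx ^^ m) ((pdy ^^ n) (\<lambda>x y. \<alpha> * a x y p + \<beta> * b x y p)) x y
      | x y p. (x, y) \<in> K}"
    then obtain x y p where xy: "(x, y) \<in> K"
      and z: "z = poly P (of_int p) * (pdx ^^ m) ((pdy ^^ n) (\<lambda>x y. \<alpha> * a x y p + \<beta> * b x y p)) x y"
      by blast
    let ?A = "poly P (of_int p) * (pdx ^^ m) ((pdy ^^ n) (\<lambda>x y. a x y p)) x y"
    let ?B = "poly P (of_int p) * (pdx ^^ m) ((pdy ^^ n) (\<lambda>x y. b x y p)) x y"
    have nA: "norm ?A \<le> A" and nB: "norm ?B \<le> B"
      using A B xy by blast+
    have "z = \<alpha> * ?A + \<beta> * ?B"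
      unfolding z funpow_pdx_pdy_eq_iter_pd iter_pd_lincomb[OF sa sb] by (simp add: algebra_simps)
    also have "norm \<dots> \<le> norm \<alpha> * norm ?A + norm \<beta> * norm ?B"
      by (rule order.trans[OF norm_triangle_ineq]) (simp add: norm_mult)
    also have "\<dots> \<le> norm \<alpha> * A + norm \<beta> * B"
      using nA nB by (intro add_mono mult_left_mono) auto
    finally show "norm z \<le> norm \<alpha> * A + norm \<beta> * B" .
  qed
qed

lemma Sc_scale: "a \<in> Sc c \<Longrightarrow> (\<lambda>x y p. \<alpha> * a x y p) \<in> Sc c"
  using Sc_lincomb[of a c a \<alpha> 0] by simp

lemma iter_pd_const: "iter_pd ds (\<lambda>x y. k) = (\<lambda>x y. if ds = [] then k else 0)"
  by (induction ds) (auto simp: pdx_def pdy_def)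

lemma unitI_in_Sc: "unitI \<in> Sc c"
  unfolding Sc_def
proof (intro CollectI conjI allI impI)
  show "smooth2 (\<lambda>x y. unitI x y p)" for p
    unfolding smooth2_def unitI_def iter_pd_const by auto
  fix P :: "complex poly" and m n and K :: "(real \<times> real) set"
  have "{poly P (of_int p) * (pdx ^^ m) ((pdy ^^ n) (\<lambda>x y. unitI x y p)) x y | x y p. (x, y) \<in> K}
      \<subseteq> {0, poly P 0}"
    unfolding funpow_pdx_pdy_eq_iter_pd unitI_def by (auto simp: if_distrib iter_pd_const cong: if_cong)
  then show "bounded {poly P (of_int p) * (pdx ^^ m) ((pdy ^^ n) (\<lambda>x y. unitI x y p)) x y
      | x y p. (x, y) \<in> K}"
    by (rule bounded_subset[rotated]) auto
qed (simp_all add: unitI_def ee_def)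

lemma Asa_lincomb:
  assumes "a \<in> Asa c" and "b \<in> Asa c"
  shows "(\<lambda>x y p. complex_of_real \<alpha> * a x y p + complex_of_real \<beta> * b x y p) \<in> Asa c"
proof -
  have "cnj (a x y (-p)) = a x y p" "cnj (b x y (-p)) = b x y p" for x y p
    using assms unfolding Asa_def star3_def by (metis (mono_tags, lifting) mem_Collect_eq)+
  with assms show ?thesis
    unfolding Asa_def by (auto intro!: Sc_lincomb simp: star3_def fun_eq_iff)
qed

lemma Asa_scale: "a \<in> Asa c \<Longrightarrow> (\<lambda>x y p. complex_of_real t * a x y p) \<in> Asa c"
  using Asa_lincomb[of a c a t 0] by simp

lemma unitI_in_Asa: "unitI \<in> Asa c"
  unfolding Asa_def using unitI_in_Sc by (auto simp: star3_def unitI_def fun_eq_iff)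

lemma Asa_diff_real_unitI:
  assumes "a \<in> Asa c" and "a' \<in> Asa c"
  shows "(\<lambda>x y p. a x y p - a' x y p - complex_of_real R * unitI x y p) \<in> Asa c"
  using Asa_lincomb[OF assms(1) Asa_lincomb[OF assms(2) unitI_in_Asa, of 1 R], of 1 "-1"]
  by (simp add: algebra_simps)

lemma Asa_Im_slice0: "a \<in> Asa c \<Longrightarrow> Im (a x y 0) = 0"
  unfolding Asa_def star3_def by (metis (mono_tags, lifting) cnj.sel(2) mem_Collect_eq minus_zero neg_equal_zero)

section \<open>Quasi-periodicity and decay in p\<close>

lemma Sc_differentiable:
  assumes "a \<in> Sc c"
  shows Sc_differentiable_x: "(\<lambda>t. a t y p) differentiable (at x)"
    and Sc_differentiable_y: "(\<lambda>t. a x t p) differentiable (at y)"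
proof -
  have "(\<lambda>t. iter_pd [] (\<lambda>x y. a x y p) t y) differentiable (at x)
      \<and> (\<lambda>t. iter_pd [] (\<lambda>x y. a x y p) x t) differentiable (at y)"
    using Sc_smooth[OF assms, of p] unfolding smooth2_def by blast
  then show "(\<lambda>t. a t y p) differentiable (at x)" and "(\<lambda>t. a x t p) differentiable (at y)"
    by simp_all
qed

lemma norm_ee [simp]: "cmod (ee t) = 1"
proof -
  have "ee t = exp (\<i> * complex_of_real (2 * pi * t))"
    by (simp add: ee_def algebra_simps)
  then show ?thesis
    by (simp add: norm_exp_i_times)
qed

lemma ee_has_vector_derivative:
  "((\<lambda>t. ee (r * t)) has_vector_derivative 2 * complex_of_real pi * \<i> * complex_of_real r * ee (r * t)) (at t)"
proof -
  have "((\<lambda>t. r * t) has_real_derivative r) (at t)"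
    by (auto intro!: derivative_eq_intros)
  then have "((\<lambda>t. complex_of_real (r * t)) has_vector_derivative complex_of_real r) (at t)"
    by (rule has_vector_derivative_of_real)
  then have "((\<lambda>t. 2 * complex_of_real pi * \<i> * complex_of_real (r * t))
      has_vector_derivative 2 * complex_of_real pi * \<i> * complex_of_real r) (at t)"
    by (rule has_vector_derivative_mult_right)
  from field_vector_diff_chain_at[OF this DERIV_exp] show ?thesis
    by (simp add: ee_def o_def mult.commute)
qed

lemma vector_derivative_shift:
  fixes f :: "real \<Rightarrow> complex"
  assumes "f differentiable (at (x + k))"
  shows "vector_derivative (\<lambda>t. f (t + k)) (at x) = vector_derivative f (at (x + k))"
proof -
  have "((\<lambda>t. t + k) has_vector_derivative 1) (at x)"
    by (auto intro!: derivative_eq_intros)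
  moreover have "(f has_vector_derivative vector_derivative f (at (x + k))) (at ((\<lambda>t. t + k) x))"
    using assms vector_derivative_works by auto
  ultimately have "(f \<circ> (\<lambda>t. t + k) has_vector_derivative 1 *\<^sub>R vector_derivative f (at (x + k))) (at x)"
    by (rule vector_diff_chain_at)
  then show ?thesis
    by (intro vector_derivative_at) (simp add: o_def)
qed

lemma delta1_quasi_periodic:
  assumes "a \<in> Sc c"
  shows "delta1 a (x + of_int k) y p = ee (real c * of_int k * of_int p * y) * delta1 a x y p"
proof -
  have "vector_derivative (\<lambda>t. a t y p) (at (x + of_int k))
      = vector_derivative (\<lambda>t. a (t + of_int k) y p) (at x)"
    by (rule vector_derivative_shift[symmetric]) (rule Sc_differentiable_x[OF assms])
  also have "(\<lambda>t. a (t + of_int k) y p) = (\<lambda>t. ee (real c * of_int k * of_int p * y) * a t y p)"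
    using Sc_quasi_periodic_x[OF assms] by (simp add: fun_eq_iff)
  finally show ?thesis
    using Sc_differentiable_x[OF assms] unfolding delta1_def by simp
qed

text \<open>Differentiating the quasi-periodicity in y produces the term
  2 pi i c k p a, which the multiplier in delta2 absorbs.\<close>
lemma delta2_quasi_periodic:
  assumes "a \<in> Sc c"
  shows "delta2 c a (x + of_int k) y p = ee (real c * of_int k * of_int p * y) * delta2 c a x y p"
proof -
  define r where "r = real c * of_int k * of_int p"
  have shift: "(\<lambda>t. a (x + of_int k) t p) = (\<lambda>t. ee (r * t) * a x t p)"
    using Sc_quasi_periodic_x[OF assms] by (simp add: fun_eq_iff r_def)
  have "((\<lambda>t. ee (r * t) * a x t p) has_vector_derivative
      ee (r * y) * vector_derivative (\<lambda>t. a x t p) (at y)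
      + 2 * complex_of_real pi * \<i> * complex_of_real r * ee (r * y) * a x y p) (at y)"
    using Sc_differentiable_y[OF assms] vector_derivative_works
    by (intro has_vector_derivative_mult[OF ee_has_vector_derivative]) blast
  then have "vector_derivative (\<lambda>t. a (x + of_int k) t p) (at y)
      = ee (r * y) * vector_derivative (\<lambda>t. a x t p) (at y)
        + 2 * complex_of_real pi * \<i> * complex_of_real r * ee (r * y) * a x y p"
    unfolding shift by (rule vector_derivative_at)
  moreover have "a (x + of_int k) y p = ee (r * y) * a x y p"
    using Sc_quasi_periodic_x[OF assms] by (simp add: r_def)
  ultimately show ?thesis
    unfolding delta2_def by (simp add: r_def algebra_simps)
qed

definition modulus_periodic :: "fn3 \<Rightarrow> bool" where
  "modulus_periodic g \<longleftrightarrow> (\<forall>x y p (k::int).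
     cmod (g (x + of_int k) y p) = cmod (g x y p) \<and> cmod (g x (y + of_int k) p) = cmod (g x y p))"

lemma modulus_periodic_bound:
  assumes "modulus_periodic g"
    and "\<And>x y. x \<in> {0..1} \<Longrightarrow> y \<in> {0..1} \<Longrightarrow> cmod (g x y p) \<le> B"
  shows "cmod (g x y p) \<le> B"
proof -
  have "cmod (g x y p) = cmod (g (frac x + of_int \<lfloor>x\<rfloor>) (frac y + of_int \<lfloor>y\<rfloor>) p)"
    by (simp add: frac_def)
  also have "\<dots> = cmod (g (frac x) (frac y + of_int \<lfloor>y\<rfloor>) p)"
    using assms(1) unfolding modulus_periodic_def by blast
  also have "\<dots> = cmod (g (frac x) (frac y) p)"
    using assms(1) unfolding modulus_periodic_def by blast
  also have "\<dots> \<le> B"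
    using frac_ge_0 frac_lt_1 by (intro assms(2)) (auto intro: less_imp_le)
  finally show ?thesis .
qed

lemma Sc_modulus_periodic:
  assumes "a \<in> Sc c"
  shows "modulus_periodic a"
  unfolding modulus_periodic_def
proof (intro allI conjI)
  fix x y p and k :: int
  show "cmod (a (x + of_int k) y p) = cmod (a x y p)"
    by (simp add: Sc_quasi_periodic_x[OF assms] norm_mult)
  show "cmod (a x (y + of_int k) p) = cmod (a x y p)"
    by (simp add: Sc_periodic_y[OF assms])
qed

lemma delta_modulus_periodic:
  assumes "a \<in> Sc c"
  shows "modulus_periodic (delta1 a)" and "modulus_periodic (delta2 c a)"
    and "modulus_periodic (delta3 a)"
proof -
  have y_shift: "(\<lambda>t. a t (y + of_int k) p) = (\<lambda>t. a t y p)" for y p k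
    by (simp add: Sc_periodic_y[OF assms])
  have dy_shift: "vector_derivative (\<lambda>t. a x t p) (at (y + of_int k))
      = vector_derivative (\<lambda>t. a x t p) (at y)" for x y p k
  proof -
    have "vector_derivative (\<lambda>t. a x t p) (at (y + of_int k))
        = vector_derivative (\<lambda>t. a x (t + of_int k) p) (at y)"
      by (rule vector_derivative_shift[symmetric]) (rule Sc_differentiable_y[OF assms])
    also have "(\<lambda>t. a x (t + of_int k) p) = (\<lambda>t. a x t p)"
      by (simp add: Sc_periodic_y[OF assms])
    finally show ?thesis .
  qed
  show "modulus_periodic (delta1 a)"
    unfolding modulus_periodic_def
    by (simp add: delta1_quasi_periodic[OF assms] norm_mult)
      (simp add: delta1_def y_shift)
  show "modulus_periodic (delta2 c a)"
    unfolding modulus_periodic_def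
    by (simp add: delta2_quasi_periodic[OF assms] norm_mult)
      (simp add: delta2_def dy_shift Sc_periodic_y[OF assms])
  show "modulus_periodic (delta3 a)"
    using Sc_modulus_periodic[OF assms] unfolding modulus_periodic_def delta3_def by (simp add: norm_mult)
qed

definition decay :: "fn3 \<Rightarrow> bool" where
  "decay g \<longleftrightarrow> (\<exists>C. \<forall>x y p. (1 + (real_of_int p)\<^sup>2) * cmod (g x y p) \<le> C)"

lemma summable_on_inverse_one_plus_square:
  "(\<lambda>p::int. 1 / (1 + (real_of_int p)\<^sup>2)) summable_on UNIV"
proof -
  define f where "f p = 1 / (1 + (real_of_int p)\<^sup>2)" for p :: int
  have "summable (\<lambda>n. 1 / (1 + (real n)\<^sup>2))"
  proof (rule summable_comparison_test')
    show "summable (\<lambda>n. inverse (real n ^ 2))"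
      using inverse_power_summable[of 2, where 'a=real] by simp
    show "norm (1 / (1 + (real n)\<^sup>2)) \<le> inverse (real n ^ 2)" if "n \<ge> 1" for n
      using that by (auto simp: divide_inverse intro!: le_imp_inverse_le)
  qed
  then have nat: "(\<lambda>n. f (int n)) summable_on UNIV"
    by (intro summable_nonneg_imp_summable_on) (simp_all add: f_def)
  have "f summable_on range int"
    using nat by (subst summable_on_reindex) (auto simp: o_def)
  moreover have "f summable_on range (\<lambda>n. - int n)"
    using nat by (subst summable_on_reindex) (auto simp: o_def f_def inj_def)
  moreover have "range int \<union> range (\<lambda>n. - int n) = UNIV"
    by (auto intro: int_cases2[of x for x] simp: image_iff)
  ultimately show ?thesis
    unfolding f_def by (metis summable_on_union)
qed

lemma Sc_weighted_square_bound:
  assumes "a \<in> Sc c"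
  shows "\<exists>B. \<forall>p x y. x \<in> {0..1} \<longrightarrow> y \<in> {0..1} \<longrightarrow>
    (1 + (real_of_int p)\<^sup>2) * \<bar>real_of_int p\<bar> ^ j * cmod ((pdx ^^ m) ((pdy ^^ n) (\<lambda>x y. a x y p)) x y) \<le> B"
proof -
  define P :: "complex poly" where "P = [:1, 0, 1:] * [:0, 1:] ^ j"
  have P: "cmod (poly P (of_int p)) = (1 + (real_of_int p)\<^sup>2) * \<bar>real_of_int p\<bar> ^ j" for p
  proof -
    have "poly P (of_int p) = of_real ((1 + (real_of_int p)\<^sup>2) * real_of_int p ^ j)"
      by (simp add: P_def power2_eq_square algebra_simps)
    then have "cmod (poly P (of_int p)) = \<bar>(1 + (real_of_int p)\<^sup>2) * real_of_int p ^ j\<bar>"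
      by (simp only: norm_of_real)
    then show ?thesis
      by (simp add: abs_mult power_abs)
  qed
  have "compact ({0..1::real} \<times> {0..1::real})"
    by (simp add: compact_Times)
  from Sc_bounded[OF assms this, of P m n] obtain B where B:
    "\<forall>z\<in>{poly P (of_int p) * (pdx ^^ m) ((pdy ^^ n) (\<lambda>x y. a x y p)) x y
      | x y p. (x, y) \<in> {0..1} \<times> {0..1}}. cmod z \<le> B"
    unfolding bounded_iff by blast
  have "(1 + (real_of_int p)\<^sup>2) * \<bar>real_of_int p\<bar> ^ j
      * cmod ((pdx ^^ m) ((pdy ^^ n) (\<lambda>x y. a x y p)) x y) \<le> B"
    if "x \<in> {0..1}" "y \<in> {0..1}" for p x y
  proof -
    have "poly P (of_int p) * (pdx ^^ m) ((pdy ^^ n) (\<lambda>x y. a x y p)) x y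
      \<in> {poly P (of_int p) * (pdx ^^ m) ((pdy ^^ n) (\<lambda>x y. a x y p)) x y
      | x y p. (x, y) \<in> {0..1} \<times> {0..1}}"
      using that by blast
    with B have "cmod (poly P (of_int p) * (pdx ^^ m) ((pdy ^^ n) (\<lambda>x y. a x y p)) x y) \<le> B"
      by blast
    then show ?thesis
      by (simp add: norm_mult P)
  qed
  then show ?thesis
    by blast
qed

lemma decay_if_bounded_on_unit_square:
  assumes "modulus_periodic g"
    and "\<And>p x y. x \<in> {0..1} \<Longrightarrow> y \<in> {0..1} \<Longrightarrow> (1 + (real_of_int p)\<^sup>2) * cmod (g x y p) \<le> C"
  shows "decay g"
  unfolding decay_def
proof (intro exI allI)
  fix x y p
  have w: "0 < 1 + (real_of_int p)\<^sup>2"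
    by (simp add: add_pos_nonneg)
  have "cmod (g x y p) \<le> C / (1 + (real_of_int p)\<^sup>2)"
  proof (rule modulus_periodic_bound[OF assms(1)])
    fix x y :: real
    assume "x \<in> {0..1}" "y \<in> {0..1}"
    then have "(1 + (real_of_int p)\<^sup>2) * cmod (g x y p) \<le> C"
      by (rule assms(2))
    then show "cmod (g x y p) \<le> C / (1 + (real_of_int p)\<^sup>2)"
      using w by (simp add: pos_le_divide_eq mult.commute)
  qed
  then show "(1 + (real_of_int p)\<^sup>2) * cmod (g x y p) \<le> C"
    using w by (simp add: pos_le_divide_eq mult.commute)
qed

lemma Sc_decay:
  assumes "a \<in> Sc c"
  shows "decay a"
proof -
  obtain B where B: "\<And>p x y. x \<in> {0..1} \<Longrightarrow> y \<in> {0..1} \<Longrightarrow>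
      (1 + (real_of_int p)\<^sup>2) * \<bar>real_of_int p\<bar> ^ 0 * cmod ((pdx ^^ 0) ((pdy ^^ 0) (\<lambda>x y. a x y p)) x y) \<le> B"
    using Sc_weighted_square_bound[OF assms, where j=0 and m=0 and n=0] by blast
  show ?thesis
  proof (rule decay_if_bounded_on_unit_square[OF Sc_modulus_periodic[OF assms]])
    fix p :: int and x y :: real
    assume "x \<in> {0..1}" "y \<in> {0..1}"
    from B[OF this] show "(1 + (real_of_int p)\<^sup>2) * cmod (a x y p) \<le> B"
      by simp
  qed
qed

lemma delta1_decay:
  assumes "a \<in> Sc c"
  shows "decay (delta1 a)"
proof -
  obtain B where B: "\<And>p x y. x \<in> {0..1} \<Longrightarrow> y \<in> {0..1} \<Longrightarrow>
      (1 + (real_of_int p)\<^sup>2) * \<bar>real_of_int p\<bar> ^ 0 * cmod ((pdx ^^ 1) ((pdy ^^ 0) (\<lambda>x y. a x y p)) x y) \<le> B"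
    using Sc_weighted_square_bound[OF assms, where j=0 and m=1 and n=0] by blast
  show ?thesis
  proof (rule decay_if_bounded_on_unit_square[OF delta_modulus_periodic(1)[OF assms]])
    fix p :: int and x y :: real
    assume "x \<in> {0..1}" "y \<in> {0..1}"
    from B[OF this] show "(1 + (real_of_int p)\<^sup>2) * cmod (delta1 a x y p) \<le> B"
      by (simp add: pdx_def delta1_def)
  qed
qed

lemma delta3_decay:
  assumes "a \<in> Sc c"
  shows "decay (delta3 a)"
proof -
  obtain B where B: "\<And>p x y. x \<in> {0..1} \<Longrightarrow> y \<in> {0..1} \<Longrightarrow>
      (1 + (real_of_int p)\<^sup>2) * \<bar>real_of_int p\<bar> ^ 1 * cmod ((pdx ^^ 0) ((pdy ^^ 0) (\<lambda>x y. a x y p)) x y) \<le> B"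
    using Sc_weighted_square_bound[OF assms, where j=1 and m=0 and n=0] by blast
  show ?thesis
  proof (rule decay_if_bounded_on_unit_square[OF delta_modulus_periodic(3)[OF assms]])
    fix p :: int and x y :: real
    assume "x \<in> {0..1}" "y \<in> {0..1}"
    have "(1 + (real_of_int p)\<^sup>2) * cmod (delta3 a x y p)
        = 2 * pi * ((1 + (real_of_int p)\<^sup>2) * \<bar>real_of_int p\<bar> * cmod (a x y p))"
      by (simp add: delta3_def norm_mult)
    also have "\<dots> \<le> 2 * pi * B"
      using B[OF \<open>x \<in> {0..1}\<close> \<open>y \<in> {0..1}\<close>, of p] by (simp add: mult.assoc)
    finally show "(1 + (real_of_int p)\<^sup>2) * cmod (delta3 a x y p) \<le> 2 * pi * B" .
  qed
qed

lemma delta2_decay: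
  assumes "a \<in> Sc c"
  shows "decay (delta2 c a)"
proof -
  obtain B0 where B0: "\<And>p x y. x \<in> {0..1} \<Longrightarrow> y \<in> {0..1} \<Longrightarrow>
      (1 + (real_of_int p)\<^sup>2) * \<bar>real_of_int p\<bar> ^ 1 * cmod ((pdx ^^ 0) ((pdy ^^ 0) (\<lambda>x y. a x y p)) x y) \<le> B0"
    using Sc_weighted_square_bound[OF assms, where j=1 and m=0 and n=0] by blast
  obtain By where By: "\<And>p x y. x \<in> {0..1} \<Longrightarrow> y \<in> {0..1} \<Longrightarrow>
      (1 + (real_of_int p)\<^sup>2) * \<bar>real_of_int p\<bar> ^ 0 * cmod ((pdx ^^ 0) ((pdy ^^ 1) (\<lambda>x y. a x y p)) x y) \<le> By"
    using Sc_weighted_square_bound[OF assms, where j=0 and m=0 and n=1] by blast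
  show ?thesis
  proof (rule decay_if_bounded_on_unit_square[OF delta_modulus_periodic(2)[OF assms]])
    fix p :: int and x y :: real
    assume xy: "x \<in> {0..1}" "y \<in> {0..1}"
    let ?w = "1 + (real_of_int p)\<^sup>2" and ?dy = "cmod (vector_derivative (\<lambda>t. a x t p) (at y))"
    have "cmod (delta2 c a x y p) \<le> 2 * pi * real c * \<bar>real_of_int p\<bar> * \<bar>x\<bar> * cmod (a x y p) + ?dy"
      unfolding delta2_def by (rule order.trans[OF norm_triangle_ineq4]) (simp add: norm_mult)
    also have "2 * pi * real c * \<bar>real_of_int p\<bar> * \<bar>x\<bar> * cmod (a x y p)
        = (2 * pi * real c * \<bar>real_of_int p\<bar> * cmod (a x y p)) * \<bar>x\<bar>"
      by (simp add: algebra_simps)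
    also have "\<dots> \<le> 2 * pi * real c * \<bar>real_of_int p\<bar> * cmod (a x y p)"
      using xy by (intro mult_left_le) auto
    finally have "?w * cmod (delta2 c a x y p)
        \<le> ?w * (2 * pi * real c * \<bar>real_of_int p\<bar> * cmod (a x y p) + ?dy)"
      by (simp add: add_pos_nonneg)
    also have "\<dots> = 2 * pi * real c * (?w * \<bar>real_of_int p\<bar> * cmod (a x y p)) + ?w * ?dy"
      by (simp add: algebra_simps)
    also have "\<dots> \<le> 2 * pi * real c * B0 + By"
      using B0[OF xy] By[OF xy] by (intro add_mono mult_left_mono) (simp_all add: pdy_def)
    finally show "?w * cmod (delta2 c a x y p) \<le> 2 * pi * real c * B0 + By" .
  qed
qed

text \<open>On an unbounded slice the supremum is an unspecified real; hence the decay hypotheses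
  below.\<close>
definition slice_sup :: "fn3 \<Rightarrow> int \<Rightarrow> real" where
  "slice_sup g p = (SUP z. cmod (g (fst z) (snd z) p))"

lemma norm_ii1_eq_infsum_slice_sup: "norm_ii1 g = (\<Sum>\<^sub>\<infinity>p. slice_sup g p)"
  unfolding norm_ii1_def slice_sup_def by simp

lemma slice_sup_le: "(\<And>x y. cmod (g x y p) \<le> B) \<Longrightarrow> slice_sup g p \<le> B"
  unfolding slice_sup_def by (rule cSUP_least) auto

lemma norm_le_slice_sup:
  assumes "\<And>x y. cmod (g x y p) \<le> B"
  shows "cmod (g x y p) \<le> slice_sup g p"
proof -
  have "bdd_above (range (\<lambda>z. cmod (g (fst z) (snd z) p)))"
    using assms by (intro bdd_aboveI2[where M=B]) simp
  from cSUP_upper[OF _ this, of "(x, y)"] show ?thesis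
    unfolding slice_sup_def by simp
qed

lemma decay_bound:
  assumes "decay g"
  obtains C where "\<And>x y p. cmod (g x y p) \<le> C * (1 / (1 + (real_of_int p)\<^sup>2))"
proof -
  obtain C where C: "\<And>x y p. (1 + (real_of_int p)\<^sup>2) * cmod (g x y p) \<le> C"
    using assms unfolding decay_def by blast
  have "cmod (g x y p) \<le> C * (1 / (1 + (real_of_int p)\<^sup>2))" for x y p
    using C[of p x y] by (simp add: pos_le_divide_eq add_pos_nonneg mult.commute)
  then show thesis
    by (rule that)
qed

lemma decay_norm_le_slice_sup:
  assumes "decay g"
  shows "cmod (g x y p) \<le> slice_sup g p"
proof -
  obtain C where "\<And>x y p. cmod (g x y p) \<le> C * (1 / (1 + (real_of_int p)\<^sup>2))"
    using decay_bound[OF assms] by blast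
  then show ?thesis
    by (rule norm_le_slice_sup)
qed

lemma decay_slice_sup_nonneg: "decay g \<Longrightarrow> 0 \<le> slice_sup g p"
  using decay_norm_le_slice_sup[of g 0 0 p] norm_ge_zero order.trans by blast

lemma decay_summable_slice_sup:
  assumes "decay g"
  shows "slice_sup g summable_on UNIV"
proof -
  obtain C where C: "\<And>x y p. cmod (g x y p) \<le> C * (1 / (1 + (real_of_int p)\<^sup>2))"
    using decay_bound[OF assms] by blast
  show ?thesis
  proof (rule summable_on_comparison_test[OF summable_on_cmult_right[OF summable_on_inverse_one_plus_square, where c=C]])
    fix p :: int
    show "slice_sup g p \<le> C * (1 / (1 + (real_of_int p)\<^sup>2))"
      by (rule slice_sup_le) (rule C)
    show "0 \<le> slice_sup g p"
      by (rule decay_slice_sup_nonneg[OF assms])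
  qed
qed

lemma decay_slice_sup_le_norm_ii1:
  assumes "decay g"
  shows "slice_sup g p \<le> norm_ii1 g"
  using finite_sum_le_infsum[OF decay_summable_slice_sup[OF assms], of "{p}"]
    decay_slice_sup_nonneg[OF assms]
  by (simp add: norm_ii1_eq_infsum_slice_sup)

lemma decay_norm_le_norm_ii1: "decay g \<Longrightarrow> cmod (g x y p) \<le> norm_ii1 g"
  using decay_norm_le_slice_sup decay_slice_sup_le_norm_ii1 order.trans by blast

lemma norm_ii1_le_infsum:
  assumes "decay g" and "M summable_on UNIV" and "\<And>x y p. cmod (g x y p) \<le> M p"
  shows "norm_ii1 g \<le> (\<Sum>\<^sub>\<infinity>p. M p)"
  unfolding norm_ii1_eq_infsum_slice_sup
  using decay_summable_slice_sup[OF assms(1)] assms(2)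
  by (rule infsum_mono) (rule slice_sup_le[OF assms(3)])

lemma norm_ii1_scale_le:
  assumes "decay g" and "decay g'" and "\<And>x y p. cmod (g' x y p) \<le> t * cmod (g x y p)" and "0 \<le> t"
  shows "norm_ii1 g' \<le> t * norm_ii1 g"
proof -
  have "norm_ii1 g' \<le> (\<Sum>\<^sub>\<infinity>p. t * slice_sup g p)"
  proof (rule norm_ii1_le_infsum[OF assms(2)])
    show "(\<lambda>p. t * slice_sup g p) summable_on UNIV"
      by (rule summable_on_cmult_right[OF decay_summable_slice_sup[OF assms(1)]])
    show "cmod (g' x y p) \<le> t * slice_sup g p" for x y p
      using assms(3)[of x y p] mult_left_mono[OF decay_norm_le_slice_sup[OF assms(1)] assms(4)]
      by (rule order.trans)
  qed
  then show ?thesis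
    by (simp add: norm_ii1_eq_infsum_slice_sup infsum_cmult_right')
qed

section \<open>The Lip norm and its kernel\<close>

lemma norm_ii1_delta_le_Lip:
  shows "norm_ii1 (delta1 a) \<le> Lip c a" and "norm_ii1 (delta2 c a) \<le> Lip c a"
    and "norm_ii1 (delta3 a) \<le> Lip c a"
  unfolding Lip_def by auto

lemma norm_delta_le_Lip:
  assumes "a \<in> Sc c"
  shows "cmod (delta1 a x y p) \<le> Lip c a" and "cmod (delta2 c a x y p) \<le> Lip c a"
    and "cmod (delta3 a x y p) \<le> Lip c a"
  using order.trans[OF decay_norm_le_norm_ii1[OF delta1_decay[OF assms]] norm_ii1_delta_le_Lip(1)]
    order.trans[OF decay_norm_le_norm_ii1[OF delta2_decay[OF assms]] norm_ii1_delta_le_Lip(2)]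
    order.trans[OF decay_norm_le_norm_ii1[OF delta3_decay[OF assms]] norm_ii1_delta_le_Lip(3)]
  by blast+

lemma Lip_nonneg: "a \<in> Sc c \<Longrightarrow> 0 \<le> Lip c a"
  using norm_delta_le_Lip(1)[of a c 0 0 0] norm_ge_zero order.trans by blast

lemma norm_delta3: "cmod (delta3 a x y p) = 2 * pi * \<bar>real_of_int p\<bar> * cmod (a x y p)"
  by (simp add: delta3_def norm_mult)

lemma infsum_slice_sup_delta3_le_Lip: "(\<Sum>\<^sub>\<infinity>p. slice_sup (delta3 a) p) \<le> Lip c a"
  using norm_ii1_delta_le_Lip(3) by (simp add: norm_ii1_eq_infsum_slice_sup)

lemma norm_diff_le_of_vector_derivative_bound:
  fixes f :: "real \<Rightarrow> 'a::real_normed_vector"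
  assumes "\<And>t. (f has_vector_derivative f' t) (at t)" and "\<And>t. norm (f' t) \<le> B"
  shows "norm (f u - f v) \<le> B * \<bar>u - v\<bar>"
proof -
  have "onorm (\<lambda>h. h *\<^sub>R f' t) \<le> B" for t
  proof (rule onorm_bound)
    show "0 \<le> B"
      using assms(2)[of t] norm_ge_zero order.trans by blast
    show "norm (h *\<^sub>R f' t) \<le> B * norm h" for h
      using assms(2)[of t] by (metis abs_ge_zero mult.commute mult_left_mono norm_scaleR real_norm_def)
  qed
  then show ?thesis
    using differentiable_bound[of UNIV f "\<lambda>t h. h *\<^sub>R f' t" B u v] assms(1)
    by (simp add: has_vector_derivative_def)
qed

text \<open>delta1 and delta2 bound the two partial derivatives; in y the multiplier of delta2
  contributes c |x| |delta3 a|, whence the restriction on x1.\<close>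
lemma Sc_Lipschitz_slice:
  assumes "a \<in> Sc c" and "\<bar>x1\<bar> \<le> 1"
  shows "cmod (a x1 y1 p - a x2 y2 p) \<le> Lip c a * (\<bar>x1 - x2\<bar> + (real c + 1) * \<bar>y1 - y2\<bar>)"
proof -
  have "((\<lambda>t. a t y2 p) has_vector_derivative vector_derivative (\<lambda>t. a t y2 p) (at t)) (at t)" for t
    using Sc_differentiable_x[OF assms(1)] vector_derivative_works by blast
  moreover have "cmod (vector_derivative (\<lambda>t. a t y2 p) (at t)) \<le> Lip c a" for t
    using norm_delta_le_Lip(1)[OF assms(1), of t y2 p] by (simp add: delta1_def)
  ultimately have x_part: "cmod (a x1 y2 p - a x2 y2 p) \<le> Lip c a * \<bar>x1 - x2\<bar>"
    by (rule norm_diff_le_of_vector_derivative_bound)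
  have "((\<lambda>t. a x1 t p) has_vector_derivative vector_derivative (\<lambda>t. a x1 t p) (at t)) (at t)" for t
    using Sc_differentiable_y[OF assms(1)] vector_derivative_works by blast
  moreover have "cmod (vector_derivative (\<lambda>t. a x1 t p) (at t)) \<le> (real c + 1) * Lip c a" for t
  proof -
    have "vector_derivative (\<lambda>t. a x1 t p) (at t)
        = 2 * complex_of_real pi * \<i> * of_nat c * of_int p * complex_of_real x1 * a x1 t p - delta2 c a x1 t p"
      by (simp add: delta2_def)
    also have "cmod \<dots> \<le> real c * \<bar>x1\<bar> * cmod (delta3 a x1 t p) + cmod (delta2 c a x1 t p)"
      by (rule order.trans[OF norm_triangle_ineq4]) (simp add: norm_mult norm_delta3)
    also have "\<dots> \<le> real c * 1 * Lip c a + Lip c a"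
      using assms norm_delta_le_Lip[OF assms(1)] by (intro add_mono mult_mono mult_left_mono) auto
    finally show ?thesis
      by (simp add: algebra_simps)
  qed
  ultimately have y_part: "cmod (a x1 y1 p - a x1 y2 p) \<le> (real c + 1) * Lip c a * \<bar>y1 - y2\<bar>"
    by (rule norm_diff_le_of_vector_derivative_bound)
  have "a x1 y1 p - a x2 y2 p = (a x1 y1 p - a x1 y2 p) + (a x1 y2 p - a x2 y2 p)"
    by simp
  then have "cmod (a x1 y1 p - a x2 y2 p) \<le> cmod (a x1 y1 p - a x1 y2 p) + cmod (a x1 y2 p - a x2 y2 p)"
    by (metis norm_triangle_ineq)
  with x_part y_part show ?thesis
    by (simp add: algebra_simps)
qed

lemma vector_derivative_zero_imp_constant:
  fixes f :: "real \<Rightarrow> complex"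
  assumes "\<And>t. f differentiable (at t)" and "\<And>t. vector_derivative f (at t) = 0"
  shows "f u = f v"
proof -
  have "(f has_vector_derivative 0) (at t)" for t
    using assms(1)[of t] assms(2)[of t] vector_derivative_works[of f "at t"] by simp
  then have "norm (f u - f v) \<le> 0 * \<bar>u - v\<bar>"
    by (rule norm_diff_le_of_vector_derivative_bound) simp
  then show ?thesis
    by simp
qed

lemma Lip_eq_0_iff:
  assumes "a \<in> Asa c"
  shows "Lip c a = 0 \<longleftrightarrow> (\<exists>r::real. a = (\<lambda>x y p. complex_of_real r * unitI x y p))"
proof
  have aS: "a \<in> Sc c"
    using assms by (simp add: Asa_def)
  assume "Lip c a = 0"
  then have d1: "delta1 a x y p = 0" and d2: "delta2 c a x y p = 0" and d3: "delta3 a x y p = 0"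
    for x y p
    using norm_delta_le_Lip[OF aS, of x y p] by auto
  have off_zero: "a x y p = 0" if "p \<noteq> 0" for x y p
    using d3[of x y p] that by (simp add: delta3_def)
  have const_x: "a x y 0 = a 0 y 0" for x y
    by (rule vector_derivative_zero_imp_constant[where f="\<lambda>t. a t y 0"])
      (use Sc_differentiable_x[OF aS] d1[of _ y 0] in \<open>auto simp: delta1_def\<close>)
  have const_y: "a 0 y 0 = a 0 0 0" for y
    by (rule vector_derivative_zero_imp_constant[where f="\<lambda>t. a 0 t 0"])
      (use Sc_differentiable_y[OF aS] d2[of 0 _ 0] in \<open>auto simp: delta2_def\<close>)
  have "a x y 0 = a 0 0 0" for x y
    using const_x const_y by metis
  moreover have "complex_of_real (Re (a 0 0 0)) = a 0 0 0"
    using Asa_Im_slice0[OF assms] by (simp add: complex_eq_iff)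
  ultimately show "\<exists>r::real. a = (\<lambda>x y p. complex_of_real r * unitI x y p)"
    using off_zero by (intro exI[of _ "Re (a 0 0 0)"]) (auto simp: fun_eq_iff unitI_def)
next
  assume "\<exists>r::real. a = (\<lambda>x y p. complex_of_real r * unitI x y p)"
  then obtain r where "a = (\<lambda>x y p. complex_of_real r * unitI x y p)"
    by blast
  then have "delta1 a = (\<lambda>x y p. 0)" "delta2 c a = (\<lambda>x y p. 0)" "delta3 a = (\<lambda>x y p. 0)"
    by (auto simp: delta1_def delta2_def delta3_def unitI_def fun_eq_iff)
  then show "Lip c a = 0"
    by (simp add: Lip_def norm_ii1_def)
qed

section \<open>States are dominated by the (infinity, infinity, 1)-norm\<close>

lemma nn_integral_count_space_eq_infsum:
  fixes f :: "'a \<Rightarrow> real"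
  assumes "f summable_on UNIV" and "\<And>q. 0 \<le> f q"
  shows "(\<integral>\<^sup>+q. ennreal (f q) \<partial>count_space UNIV) = ennreal (\<Sum>\<^sub>\<infinity>q. f q)"
proof -
  have "(\<lambda>q. norm (f q)) summable_on UNIV"
    using assms by simp
  then have int: "integrable (count_space UNIV) f"
    using abs_summable_equivalent[of f UNIV] unfolding Infinite_Set_Sum.abs_summable_on_def by simp
  have "(\<integral>\<^sup>+q. ennreal (f q) \<partial>count_space UNIV) = ennreal (infsetsum f UNIV)"
    by (rule nn_integral_conv_infsetsum) (use int assms in \<open>auto simp: Infinite_Set_Sum.abs_summable_on_def\<close>)
  also have "infsetsum f UNIV = infsum f UNIV"
    by (rule infsetsum_infsum) (use int in \<open>simp add: Infinite_Set_Sum.abs_summable_on_def\<close>)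
  finally show ?thesis .
qed

lemma summable_on_if_nn_integral_finite:
  fixes f :: "'a \<Rightarrow> real"
  assumes "(\<integral>\<^sup>+q. ennreal (f q) \<partial>count_space UNIV) \<noteq> \<infinity>" and "\<And>q. 0 \<le> f q"
  shows "f summable_on UNIV"
proof -
  have "integrable (count_space UNIV) f"
    by (rule integrableI_nonneg) (use assms in \<open>auto simp: top.not_eq_extremum\<close>)
  then have "(\<lambda>q. norm (f q)) summable_on UNIV"
    using abs_summable_equivalent[of f UNIV] unfolding Infinite_Set_Sum.abs_summable_on_def by simp
  then show ?thesis
    using assms(2) by simp
qed

lemma norm_infsum_le_nn_integral:
  fixes f :: "'a \<Rightarrow> complex"
  shows "ennreal (cmod (\<Sum>\<^sub>\<infinity>q. f q)) \<le> (\<integral>\<^sup>+q. ennreal (cmod (f q)) \<partial>count_space UNIV)"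
proof (cases "(\<integral>\<^sup>+q. ennreal (cmod (f q)) \<partial>count_space UNIV) = \<infinity>")
  case False
  then have summable: "(\<lambda>q. cmod (f q)) summable_on UNIV"
    by (rule summable_on_if_nn_integral_finite) simp
  then have "cmod (\<Sum>\<^sub>\<infinity>q. f q) \<le> (\<Sum>\<^sub>\<infinity>q. cmod (f q))"
    by (intro norm_infsum_bound) simp
  then show ?thesis
    by (simp add: nn_integral_count_space_eq_infsum[OF summable] ennreal_leI)
qed simp

lemma weighted_Cauchy_Schwarz_infsum:
  fixes \<beta> v :: "'a \<Rightarrow> complex" and M :: "'a \<Rightarrow> real"
  assumes "\<And>q. cmod (\<beta> q) \<le> M q" and "M summable_on UNIV"
  shows "ennreal ((cmod (\<Sum>\<^sub>\<infinity>q. \<beta> q * v q))\<^sup>2)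
    \<le> ennreal (\<Sum>\<^sub>\<infinity>q. M q) * (\<integral>\<^sup>+q. ennreal (M q * (cmod (v q))\<^sup>2) \<partial>count_space UNIV)"
proof -
  have M0: "0 \<le> M q" for q
    using assms(1)[of q] norm_ge_zero order.trans by blast
  define f where "f q = ennreal (sqrt (M q))" for q
  define g where "g q = ennreal (sqrt (M q) * cmod (v q))" for q
  have "ennreal ((cmod (\<Sum>\<^sub>\<infinity>q. \<beta> q * v q))\<^sup>2) = (ennreal (cmod (\<Sum>\<^sub>\<infinity>q. \<beta> q * v q)))\<^sup>2"
    by (simp add: ennreal_power)
  also have "\<dots> \<le> (\<integral>\<^sup>+q. ennreal (cmod (\<beta> q * v q)) \<partial>count_space UNIV)\<^sup>2"
    by (intro power_mono norm_infsum_le_nn_integral) simp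
  also have "\<dots> \<le> (\<integral>\<^sup>+q. f q * g q \<partial>count_space UNIV)\<^sup>2"
  proof (intro power_mono nn_integral_mono)
    fix q
    have "cmod (\<beta> q * v q) \<le> sqrt (M q) * (sqrt (M q) * cmod (v q))"
      using assms(1)[of q] M0[of q] by (simp add: norm_mult mult_right_mono mult.assoc[symmetric])
    then show "ennreal (cmod (\<beta> q * v q)) \<le> f q * g q"
      using M0[of q] by (simp add: f_def g_def ennreal_mult[symmetric] ennreal_leI)
  qed simp
  also have "\<dots> \<le> (\<integral>\<^sup>+q. f q ^ 2 \<partial>count_space UNIV) * (\<integral>\<^sup>+q. g q ^ 2 \<partial>count_space UNIV)"
    by (rule Cauchy_Schwarz_nn_integral) simp_all
  also have "(\<integral>\<^sup>+q. f q ^ 2 \<partial>count_space UNIV) = ennreal (\<Sum>\<^sub>\<infinity>q. M q)"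
    using M0 by (simp add: f_def ennreal_power nn_integral_count_space_eq_infsum[OF assms(2) M0])
  also have "(\<integral>\<^sup>+q. g q ^ 2 \<partial>count_space UNIV)
      = (\<integral>\<^sup>+q. ennreal (M q * (cmod (v q))\<^sup>2) \<partial>count_space UNIV)"
    using M0 by (simp add: g_def ennreal_power power_mult_distrib)
  finally show ?thesis .
qed

lemma norm_piRep_squared_le:
  fixes \<Phi> \<xi> :: fn3 and M :: "int \<Rightarrow> real"
  assumes "\<And>x y q. cmod (\<Phi> x y q) \<le> M q" and "M summable_on UNIV"
  shows "ennreal ((cmod (piRep hb mu nu \<Phi> \<xi> x y p))\<^sup>2)
    \<le> ennreal (\<Sum>\<^sub>\<infinity>q. M q) * (\<integral>\<^sup>+q. ennreal (M q * (cmod (\<xi> x y (p - q)))\<^sup>2) \<partial>count_space UNIV)"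
  unfolding piRep_def by (rule weighted_Cauchy_Schwarz_infsum[OF assms])

lemma nn_integral_count_space_convolution:
  fixes f g :: "int \<Rightarrow> ennreal"
  shows "(\<integral>\<^sup>+p. (\<integral>\<^sup>+q. f q * g (p - q) \<partial>count_space UNIV) \<partial>count_space UNIV)
    = (\<integral>\<^sup>+q. f q \<partial>count_space UNIV) * (\<integral>\<^sup>+p. g p \<partial>count_space UNIV)"
proof -
  have shift: "(\<integral>\<^sup>+p. g (p - q) \<partial>count_space UNIV) = (\<integral>\<^sup>+p. g p \<partial>count_space UNIV)" for q
    by (rule nn_integral_bij_count_space) (auto intro!: bij_betwI[where g="\<lambda>p. p + q"])
  have "(\<integral>\<^sup>+p. (\<integral>\<^sup>+q. f q * g (p - q) \<partial>count_space UNIV) \<partial>count_space UNIV)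
      = (\<integral>\<^sup>+q. (\<integral>\<^sup>+p. f q * g (p - q) \<partial>count_space UNIV) \<partial>count_space UNIV)"
    by (rule nn_integral_count_space_nn_integral) auto
  also have "\<dots> = (\<integral>\<^sup>+q. f q * (\<integral>\<^sup>+p. g p \<partial>count_space UNIV) \<partial>count_space UNIV)"
    by (simp add: nn_integral_cmult shift)
  finally show ?thesis
    by (simp add: nn_integral_multc)
qed

text \<open>Schur's test for the matrix coefficients of pi(Phi): Cauchy-Schwarz in q at every point,
  then Tonelli; the shift p - q disappears when summing over p.\<close>
lemma l2nsq_piRep_le:
  fixes \<Phi> \<xi> :: fn3 and M :: "int \<Rightarrow> real"
  assumes Mb: "\<And>x y q. cmod (\<Phi> x y q) \<le> M q" and Ms: "M summable_on UNIV" and L2: "L2fun \<xi>"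
  shows "l2nsq (piRep hb mu nu \<Phi> \<xi>) \<le> ennreal (\<Sum>\<^sub>\<infinity>q. M q) * ennreal (\<Sum>\<^sub>\<infinity>q. M q) * l2nsq \<xi>"
proof -
  have M0: "0 \<le> M q" for q
    using Mb[of 0 0 q] norm_ge_zero order.trans by blast
  define S where "S = (\<Sum>\<^sub>\<infinity>q. M q)"
  define D :: "(real \<times> real) set" where "D = UNIV \<times> {0..1::real}"
  have [measurable]: "(\<lambda>z::real \<times> real. \<xi> (fst z) (snd z) k) \<in> borel_measurable lborel" for k
    using L2 unfolding L2fun_def by blast
  have [measurable]: "D \<in> sets lborel"
    unfolding D_def sets_lborel by (intro borel_closed closed_Times) auto
  define J where "J k = (\<integral>\<^sup>+z. ennreal ((cmod (\<xi> (fst z) (snd z) k))\<^sup>2) * indicator D z \<partial>lborel)" for k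
  define f where "f p q z = ennreal (M q * (cmod (\<xi> (fst z) (snd z) (p - q)))\<^sup>2)"
    for p q :: int and z :: "real \<times> real"
  have [measurable]: "(\<lambda>z. ennreal S * f p q z * indicator D z) \<in> borel_measurable lborel" for p q
    unfolding f_def by measurable
  have pointwise: "ennreal ((cmod (piRep hb mu nu \<Phi> \<xi> (fst z) (snd z) p))\<^sup>2) * indicator D z
      \<le> (\<integral>\<^sup>+q. ennreal S * f p q z * indicator D z \<partial>count_space UNIV)" for z p
  proof -
    have "ennreal ((cmod (piRep hb mu nu \<Phi> \<xi> (fst z) (snd z) p))\<^sup>2)
        \<le> ennreal S * (\<integral>\<^sup>+q. f p q z \<partial>count_space UNIV)"
      unfolding S_def f_def by (rule norm_piRep_squared_le[OF Mb Ms])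
    then have "ennreal ((cmod (piRep hb mu nu \<Phi> \<xi> (fst z) (snd z) p))\<^sup>2) * indicator D z
        \<le> ennreal S * (\<integral>\<^sup>+q. f p q z \<partial>count_space UNIV) * indicator D z"
      by (rule mult_right_mono) simp
    also have "\<dots> = (ennreal S * indicator D z) * (\<integral>\<^sup>+q. f p q z \<partial>count_space UNIV)"
      by (simp add: mult_ac)
    also have "\<dots> = (\<integral>\<^sup>+q. ennreal S * f p q z * indicator D z \<partial>count_space UNIV)"
      by (subst nn_integral_cmult[symmetric]) (simp_all add: mult_ac)
    finally show ?thesis .
  qed
  have "l2nsq (piRep hb mu nu \<Phi> \<xi>) = (\<integral>\<^sup>+p. (\<integral>\<^sup>+z. ennreal ((cmod (piRep hb mu nu \<Phi> \<xi> (fst z) (snd z) p))\<^sup>2)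
      * indicator D z \<partial>lborel) \<partial>count_space UNIV)"
    unfolding l2nsq_def D_def by simp
  also have "\<dots> \<le> (\<integral>\<^sup>+p. (\<integral>\<^sup>+z. (\<integral>\<^sup>+q. ennreal S * f p q z * indicator D z \<partial>count_space UNIV)
      \<partial>lborel) \<partial>count_space UNIV)"
    by (intro nn_integral_mono pointwise)
  also have "\<dots> = (\<integral>\<^sup>+p. (\<integral>\<^sup>+q. (\<integral>\<^sup>+z. ennreal S * f p q z * indicator D z \<partial>lborel)
      \<partial>count_space UNIV) \<partial>count_space UNIV)"
    by (intro nn_integral_cong nn_integral_count_space_nn_integral) auto
  also have "\<dots> = (\<integral>\<^sup>+p. (\<integral>\<^sup>+q. ennreal S * ennreal (M q) * J (p - q) \<partial>count_space UNIV) \<partial>count_space UNIV)"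
  proof (intro nn_integral_cong)
    fix p q :: int
    have "(\<integral>\<^sup>+z. ennreal S * f p q z * indicator D z \<partial>lborel)
        = (\<integral>\<^sup>+z. (ennreal S * ennreal (M q)) * (ennreal ((cmod (\<xi> (fst z) (snd z) (p - q)))\<^sup>2)
            * indicator D z) \<partial>lborel)"
      unfolding f_def using M0[of q] by (intro nn_integral_cong) (simp add: ennreal_mult mult.assoc)
    also have "\<dots> = ennreal S * ennreal (M q) * J (p - q)"
      unfolding J_def by (rule nn_integral_cmult) measurable
    finally show "(\<integral>\<^sup>+z. ennreal S * f p q z * indicator D z \<partial>lborel) = ennreal S * ennreal (M q) * J (p - q)" .
  qed
  also have "\<dots> = (\<integral>\<^sup>+q. ennreal S * ennreal (M q) \<partial>count_space UNIV) * (\<integral>\<^sup>+p. J p \<partial>count_space UNIV)"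
    by (rule nn_integral_count_space_convolution)
  also have "\<dots> = ennreal S * ennreal S * l2nsq \<xi>"
    by (simp add: nn_integral_cmult nn_integral_count_space_eq_infsum[OF Ms M0] S_def J_def l2nsq_def D_def)
  finally show ?thesis
    unfolding S_def .
qed

lemma cnorm_le_infsum:
  fixes \<Phi> :: fn3 and M :: "int \<Rightarrow> real"
  assumes "\<And>x y q. cmod (\<Phi> x y q) \<le> M q" and "M summable_on UNIV"
  shows "cnorm hb mu nu \<Phi> \<le> (\<Sum>\<^sub>\<infinity>q. M q)"
proof -
  define S where "S = (\<Sum>\<^sub>\<infinity>q. M q)"
  have S0: "0 \<le> S"
    unfolding S_def using assms(1)[of 0 0] norm_ge_zero order.trans by (blast intro: infsum_nonneg)
  have "(SUP \<xi> \<in> {\<xi>. L2fun \<xi> \<and> l2nsq \<xi> \<le> 1}. l2nsq (piRep hb mu nu \<Phi> \<xi>)) \<le> ennreal (S * S)"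
  proof (rule SUP_least)
    fix \<xi>
    assume "\<xi> \<in> {\<xi>. L2fun \<xi> \<and> l2nsq \<xi> \<le> 1}"
    then have \<xi>: "L2fun \<xi>" "l2nsq \<xi> \<le> 1"
      by auto
    have "l2nsq (piRep hb mu nu \<Phi> \<xi>) \<le> ennreal S * ennreal S * l2nsq \<xi>"
      unfolding S_def by (rule l2nsq_piRep_le[OF assms \<xi>(1)])
    also have "\<dots> \<le> ennreal S * ennreal S * 1"
      by (rule mult_left_mono[OF \<xi>(2)]) simp
    finally show "l2nsq (piRep hb mu nu \<Phi> \<xi>) \<le> ennreal (S * S)"
      using S0 by (simp add: ennreal_mult)
  qed
  then have "enn2real (SUP \<xi> \<in> {\<xi>. L2fun \<xi> \<and> l2nsq \<xi> \<le> 1}. l2nsq (piRep hb mu nu \<Phi> \<xi>)) \<le> S * S"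
    using S0 by (intro enn2real_leI) auto
  then have "cnorm hb mu nu \<Phi> \<le> sqrt (S * S)"
    unfolding cnorm_def by (rule real_sqrt_le_mono)
  then show ?thesis
    using S0 by (simp add: S_def)
qed

lemma state_extensional: "\<omega> \<in> states c hb mu nu \<Longrightarrow> \<omega> \<in> extensional (Asa c)"
  unfolding states_def by blast

lemma state_add:
  "\<omega> \<in> states c hb mu nu \<Longrightarrow> a \<in> Asa c \<Longrightarrow> b \<in> Asa c \<Longrightarrow> \<omega> (\<lambda>x y p. a x y p + b x y p) = \<omega> a + \<omega> b"
  unfolding states_def by blast

lemma state_scale:
  "\<omega> \<in> states c hb mu nu \<Longrightarrow> a \<in> Asa c \<Longrightarrow> \<omega> (\<lambda>x y p. complex_of_real r * a x y p) = r * \<omega> a"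
  unfolding states_def by blast

lemma state_unitI: "\<omega> \<in> states c hb mu nu \<Longrightarrow> \<omega> unitI = 1"
  unfolding states_def by blast

lemma state_abs_le_one:
  assumes "\<omega> \<in> states c hb mu nu" and "a \<in> Asa c" and "cnorm hb mu nu a \<le> 1"
  shows "\<bar>\<omega> a\<bar> \<le> 1"
proof -
  obtain B where B: "\<forall>a\<in>Asa c. \<bar>\<omega> a\<bar> \<le> B * cnorm hb mu nu a"
    using assms(1) unfolding states_def by blast
  have cnorm0: "0 \<le> cnorm hb mu nu b" for b
    unfolding cnorm_def by simp
  have "bdd_above {\<bar>\<omega> a\<bar> | a. a \<in> Asa c \<and> cnorm hb mu nu a \<le> 1}"
  proof (rule bdd_aboveI)
    fix v
    assume "v \<in> {\<bar>\<omega> a\<bar> | a. a \<in> Asa c \<and> cnorm hb mu nu a \<le> 1}"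
    then obtain b where b: "v = \<bar>\<omega> b\<bar>" "b \<in> Asa c" "cnorm hb mu nu b \<le> 1"
      by blast
    have "\<bar>\<omega> b\<bar> \<le> max B 0 * cnorm hb mu nu b"
      using B b(2) cnorm0[of b] by (metis max.cobounded1 mult_right_mono order.trans)
    also have "\<dots> \<le> max B 0"
      using b(3) by (simp add: mult_left_le)
    finally show "v \<le> max B 0"
      using b(1) by simp
  qed
  then have "\<bar>\<omega> a\<bar> \<le> Sup {\<bar>\<omega> a\<bar> | a. a \<in> Asa c \<and> cnorm hb mu nu a \<le> 1}"
    by (rule cSup_upper[rotated]) (use assms in blast)
  also have "\<dots> = 1"
    using assms(1) unfolding states_def by blast
  finally show ?thesis .
qed

lemma state_abs_le_infsum:
  assumes \<omega>: "\<omega> \<in> states c hb mu nu" and b: "b \<in> Asa c"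
    and Mb: "\<And>x y q. cmod (b x y q) \<le> M q" and Ms: "M summable_on UNIV"
  shows "\<bar>\<omega> b\<bar> \<le> (\<Sum>\<^sub>\<infinity>q. M q)"
proof -
  define S where "S = (\<Sum>\<^sub>\<infinity>q. M q)"
  have M0: "0 \<le> M q" for q
    using Mb[of 0 0 q] norm_ge_zero order.trans by blast
  show ?thesis
    unfolding S_def[symmetric]
  proof (cases "S = 0")
    case True
    have "M q = 0" for q
      using finite_sum_le_infsum[OF Ms, of "{q}"] M0 True by (simp add: S_def order.antisym)
    then have "b = (\<lambda>x y p. complex_of_real 0 * b x y p)"
      using Mb by (simp add: fun_eq_iff)
    then have "\<omega> b = 0"
      using state_scale[OF \<omega> b, of 0] by simp
    then show "\<bar>\<omega> b\<bar> \<le> S"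
      using True by simp
  next
    case False
    then have S: "0 < S"
      unfolding S_def using M0 by (simp add: infsum_nonneg order_less_le)
    define b' where "b' = (\<lambda>x y p. complex_of_real (1 / S) * b x y p)"
    have "cmod (b' x y q) \<le> M q * (1 / S)" for x y q
      using Mb[of x y q] S by (simp add: b'_def norm_divide divide_right_mono)
    then have "cnorm hb mu nu b' \<le> (\<Sum>\<^sub>\<infinity>q. M q * (1 / S))"
      by (rule cnorm_le_infsum) (rule summable_on_cmult_left[OF Ms])
    also have "\<dots> = S * (1 / S)"
      unfolding S_def by (rule infsum_cmult_left) (use Ms in blast)
    also have "\<dots> = 1"
      using S by simp
    finally have "cnorm hb mu nu b' \<le> 1" .
    moreover have "b' \<in> Asa c"
      unfolding b'_def by (rule Asa_scale[OF b])
    ultimately have "\<bar>\<omega> b'\<bar> \<le> 1"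
      using state_abs_le_one[OF \<omega>] by blast
    moreover have "\<omega> b' = (1 / S) * \<omega> b"
      unfolding b'_def by (rule state_scale[OF \<omega> b])
    ultimately show "\<bar>\<omega> b\<bar> \<le> S"
      using S by (simp add: abs_mult field_simps)
  qed
qed

lemma state_abs_le_norm_ii1:
  assumes "\<omega> \<in> states c hb mu nu" and "b \<in> Asa c"
  shows "\<bar>\<omega> b\<bar> \<le> norm_ii1 b"
proof -
  have "decay b"
    using Sc_decay assms(2) unfolding Asa_def by blast
  then show ?thesis
    unfolding norm_ii1_eq_infsum_slice_sup
    by (intro state_abs_le_infsum[OF assms] decay_norm_le_slice_sup decay_summable_slice_sup)
qed

lemma state_decompose:
  assumes \<omega>: "\<omega> \<in> states c hb mu nu" and a: "a \<in> Asa c" and a': "a' \<in> Asa c"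
  shows "\<omega> a = \<omega> (\<lambda>x y p. a x y p - a' x y p - complex_of_real R * unitI x y p) + \<omega> a' + R"
proof -
  define b where "b = (\<lambda>x y p. a x y p - a' x y p - complex_of_real R * unitI x y p)"
  define w where "w = (\<lambda>x y p. complex_of_real 1 * a' x y p + complex_of_real R * unitI x y p)"
  have bA: "b \<in> Asa c"
    unfolding b_def by (rule Asa_diff_real_unitI[OF a a'])
  have wA: "w \<in> Asa c"
    unfolding w_def by (rule Asa_lincomb[OF a' unitI_in_Asa])
  have "a = (\<lambda>x y p. b x y p + w x y p)"
    unfolding b_def w_def by (simp add: fun_eq_iff)
  then have "\<omega> a = \<omega> b + \<omega> w"
    using state_add[OF \<omega> bA wA] by simp
  also have "\<omega> w = 1 * \<omega> a' + R * \<omega> unitI"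
    unfolding w_def
    by (simp only: state_add[OF \<omega> Asa_scale[OF a'] Asa_scale[OF unitI_in_Asa]]
        state_scale[OF \<omega> a'] state_scale[OF \<omega> unitI_in_Asa])
  finally show ?thesis
    unfolding b_def using state_unitI[OF \<omega>] by simp
qed

section \<open>Total boundedness of the Lip unit ball modulo the unit\<close>

lemma floor_bound:
  fixes u :: real
  assumes "\<bar>u\<bar> \<le> B"
  shows "\<lfloor>u\<rfloor> \<in> {- \<lceil>B\<rceil> - 1..\<lceil>B\<rceil>}"
  using assms by (auto simp: abs_le_iff) linarith+

lemma floor_mult_eq_imp_abs_diff_le:
  fixes u v s :: real
  assumes "\<lfloor>u * s\<rfloor> = \<lfloor>v * s\<rfloor>" and "0 < s"
  shows "\<bar>u - v\<bar> \<le> 1 / s"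
proof -
  have "\<bar>u * s - v * s\<bar> \<le> 1"
    using assms(1) by linarith
  then have "\<bar>u - v\<bar> * s \<le> 1"
    using assms(2) by (simp add: abs_mult left_diff_distrib[symmetric])
  then show ?thesis
    using assms(2) by (simp add: field_simps)
qed

lemma bounded_family_finite_net:
  fixes F :: "'a \<Rightarrow> 'i \<Rightarrow> complex"
  assumes "finite I" and bound: "\<And>x i. x \<in> X \<Longrightarrow> i \<in> I \<Longrightarrow> cmod (F x i) \<le> B" and "0 < \<delta>"
  shows "\<exists>X0\<subseteq>X. finite X0 \<and> (\<forall>x\<in>X. \<exists>x'\<in>X0. \<forall>i\<in>I. cmod (F x i - F x' i) \<le> \<delta>)"
proof -
  define s where "s = 2 / \<delta>"
  have s: "0 < s"
    using assms(3) by (simp add: s_def)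
  define key where "key x = restrict (\<lambda>i. (\<lfloor>Re (F x i) * s\<rfloor>, \<lfloor>Im (F x i) * s\<rfloor>)) I" for x
  define Z where "Z = \<lceil>B * s\<rceil>"
  have "key x \<in> Pi\<^sub>E I (\<lambda>_. {- Z - 1..Z} \<times> {- Z - 1..Z})" if "x \<in> X" for x
    unfolding key_def
  proof (rule restrict_PiE_iff[THEN iffD2], intro ballI)
    fix i
    assume "i \<in> I"
    have "\<bar>Re (F x i)\<bar> * s \<le> B * s" and "\<bar>Im (F x i)\<bar> * s \<le> B * s"
      using bound[OF that \<open>i \<in> I\<close>] abs_Re_le_cmod[of "F x i"] abs_Im_le_cmod[of "F x i"] s
      by (auto intro!: mult_right_mono)
    then have "\<bar>Re (F x i) * s\<bar> \<le> B * s" and "\<bar>Im (F x i) * s\<bar> \<le> B * s"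
      using s by (simp_all add: abs_mult)
    then show "(\<lfloor>Re (F x i) * s\<rfloor>, \<lfloor>Im (F x i) * s\<rfloor>) \<in> {- Z - 1..Z} \<times> {- Z - 1..Z}"
      unfolding Z_def using floor_bound by blast
  qed
  then have "key ` X \<subseteq> Pi\<^sub>E I (\<lambda>_. {- Z - 1..Z} \<times> {- Z - 1..Z})"
    by blast
  then have fin: "finite (key ` X)"
    by (rule finite_subset) (simp add: finite_PiE assms(1))
  define rep where "rep k = (SOME x. x \<in> X \<and> key x = k)" for k
  have rep: "rep (key x) \<in> X \<and> key (rep (key x)) = key x" if "x \<in> X" for x
    unfolding rep_def by (rule someI[of _ x]) (use that in simp)
  show ?thesis
  proof (intro exI conjI ballI)
    show "rep ` key ` X \<subseteq> X" and "finite (rep ` key ` X)"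
      using rep fin by auto
    fix x
    assume x: "x \<in> X"
    show "\<exists>x'\<in>rep ` key ` X. \<forall>i\<in>I. cmod (F x i - F x' i) \<le> \<delta>"
    proof (intro bexI ballI)
      fix i
      assume "i \<in> I"
      with rep[OF x] have "\<lfloor>Re (F x i) * s\<rfloor> = \<lfloor>Re (F (rep (key x)) i) * s\<rfloor>"
        and "\<lfloor>Im (F x i) * s\<rfloor> = \<lfloor>Im (F (rep (key x)) i) * s\<rfloor>"
        unfolding key_def by (metis (no_types, lifting) prod.inject restrict_apply')+
      then have "\<bar>Re (F x i - F (rep (key x)) i)\<bar> \<le> 1 / s" and "\<bar>Im (F x i - F (rep (key x)) i)\<bar> \<le> 1 / s"
        using s by (simp_all add: floor_mult_eq_imp_abs_diff_le)
      then show "cmod (F x i - F (rep (key x)) i) \<le> \<delta>"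
        using cmod_le[of "F x i - F (rep (key x)) i"] assms(3) by (simp add: s_def)
    qed (use x in blast)
  qed
qed

lemma exists_grid_point:
  assumes "x \<in> {0..1}" and "0 < K"
  shows "\<exists>i\<le>K. \<bar>x - real i / real K\<bar> \<le> 1 / real K"
proof (intro exI[of _ "nat \<lfloor>x * real K\<rfloor>"] conjI)
  have K: "0 < real K"
    using assms(2) by simp
  have floor: "of_int \<lfloor>x * real K\<rfloor> \<le> x * real K" "x * real K < of_int \<lfloor>x * real K\<rfloor> + 1"
    by linarith+
  have "0 \<le> \<lfloor>x * real K\<rfloor>"
    using assms K by simp
  then have nat: "real (nat \<lfloor>x * real K\<rfloor>) = of_int \<lfloor>x * real K\<rfloor>"
    by simp
  have "x * real K \<le> real K"
    using assms K by simp
  then show "nat \<lfloor>x * real K\<rfloor> \<le> K"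
    using floor nat by linarith
  have "x - real (nat \<lfloor>x * real K\<rfloor>) / real K = (x * real K - real (nat \<lfloor>x * real K\<rfloor>)) / real K"
    using K by (simp add: field_simps)
  moreover have "\<bar>x * real K - real (nat \<lfloor>x * real K\<rfloor>)\<bar> \<le> 1"
    using floor nat by linarith
  ultimately show "\<bar>x - real (nat \<lfloor>x * real K\<rfloor>) / real K\<bar> \<le> 1 / real K"
    using K by (simp add: divide_right_mono)
qed

text \<open>On the slice p = 0 the value at the origin is subtracted: L does not see multiples of
  the unit, and on {L \<le> 1} only such differences are bounded.\<close>
definition grid_value :: "nat \<Rightarrow> fn3 \<Rightarrow> int \<times> nat \<times> nat \<Rightarrow> complex" where
  "grid_value K a = (\<lambda>(p, i, j). a (real i / real K) (real j / real K) p - (if p = 0 then a 0 0 0 else 0))"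

lemma abs_mult_norm_le_slice_sup_delta3:
  assumes "a \<in> Sc c"
  shows "\<bar>real_of_int p\<bar> * cmod (a x y p) \<le> slice_sup (delta3 a) p"
proof -
  have "1 * (\<bar>real_of_int p\<bar> * cmod (a x y p)) \<le> (2 * pi) * (\<bar>real_of_int p\<bar> * cmod (a x y p))"
    using pi_gt3 by (intro mult_right_mono) auto
  also have "\<dots> = cmod (delta3 a x y p)"
    by (simp add: norm_delta3)
  also have "\<dots> \<le> slice_sup (delta3 a) p"
    by (rule decay_norm_le_slice_sup[OF delta3_decay[OF assms]])
  finally show ?thesis
    by simp
qed

lemma norm_le_Lip_of_nonzero:
  assumes "a \<in> Sc c" and "p \<noteq> 0"
  shows "cmod (a x y p) \<le> Lip c a"
proof -
  have "1 \<le> \<bar>real_of_int p\<bar>"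
    using assms(2) by linarith
  then have "1 * cmod (a x y p) \<le> \<bar>real_of_int p\<bar> * cmod (a x y p)"
    by (intro mult_right_mono) auto
  also have "\<dots> \<le> slice_sup (delta3 a) p"
    by (rule abs_mult_norm_le_slice_sup_delta3[OF assms(1)])
  also have "\<dots> \<le> norm_ii1 (delta3 a)"
    by (rule decay_slice_sup_le_norm_ii1[OF delta3_decay[OF assms(1)]])
  also have "\<dots> \<le> Lip c a"
    by (rule norm_ii1_delta_le_Lip(3))
  finally show ?thesis
    by simp
qed

lemma grid_value_bounded:
  assumes "a \<in> Sc c" and "Lip c a \<le> 1" and "i \<le> K" and "j \<le> K"
  shows "cmod (grid_value K a (p, i, j)) \<le> real c + 2"
proof (cases "p = 0")
  case True
  have x: "0 \<le> real i / real K" "real i / real K \<le> 1" and y: "0 \<le> real j / real K" "real j / real K \<le> 1"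
    using assms(3,4) by (auto simp: divide_le_eq_1)
  have "cmod (grid_value K a (p, i, j)) = cmod (a (real i / real K) (real j / real K) 0 - a 0 0 0)"
    using True by (simp add: grid_value_def)
  also have "\<dots> \<le> Lip c a * (\<bar>real i / real K - 0\<bar> + (real c + 1) * \<bar>real j / real K - 0\<bar>)"
    by (rule Sc_Lipschitz_slice[OF assms(1)]) (use x in simp)
  also have "\<dots> \<le> \<bar>real i / real K - 0\<bar> + (real c + 1) * \<bar>real j / real K - 0\<bar>"
    using assms(2) Lip_nonneg[OF assms(1)] by (intro mult_left_le_one_le) auto
  also have "\<dots> \<le> 1 + (real c + 1) * 1"
    using x y by (intro add_mono mult_left_mono) auto
  finally show ?thesis
    by simp
next
  case False
  then show ?thesis
    using norm_le_Lip_of_nonzero[OF assms(1) False, of "real i / real K" "real j / real K"] assms(2)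
    by (simp add: grid_value_def)
qed

lemma slice_diff_small_on_square:
  assumes a: "a \<in> Sc c" "Lip c a \<le> 1" and a': "a' \<in> Sc c" "Lip c a' \<le> 1" and K: "0 < K"
    and close: "\<And>i j. i \<le> K \<Longrightarrow> j \<le> K \<Longrightarrow>
      cmod (grid_value K a (p, i, j) - grid_value K a' (p, i, j)) \<le> 1 / real K"
    and x: "x \<in> {0..1}" and y: "y \<in> {0..1}"
  shows "cmod (a x y p - a' x y p - (if p = 0 then a 0 0 0 - a' 0 0 0 else 0)) \<le> (2 * real c + 5) / real K"
proof -
  obtain i where i: "i \<le> K" "\<bar>x - real i / real K\<bar> \<le> 1 / real K"
    using exists_grid_point[OF x K] by blast
  obtain j where j: "j \<le> K" "\<bar>y - real j / real K\<bar> \<le> 1 / real K"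
    using exists_grid_point[OF y K] by blast
  define gx gy where "gx = real i / real K" and "gy = real j / real K"
  have "\<bar>x - gx\<bar> + (real c + 1) * \<bar>y - gy\<bar> \<le> 1 / real K + (real c + 1) * (1 / real K)"
    using i j unfolding gx_def gy_def by (intro add_mono mult_left_mono) auto
  also have "\<dots> = (real c + 2) / real K"
    using K by (simp add: field_simps)
  finally have dist: "\<bar>x - gx\<bar> + (real c + 1) * \<bar>y - gy\<bar> \<le> (real c + 2) / real K" .
  have osc: "cmod (f x y p - f gx gy p) \<le> (real c + 2) / real K" if "f \<in> Sc c" "Lip c f \<le> 1" for f
  proof -
    have "cmod (f x y p - f gx gy p) \<le> Lip c f * (\<bar>x - gx\<bar> + (real c + 1) * \<bar>y - gy\<bar>)"
      using x by (intro Sc_Lipschitz_slice[OF that(1)]) auto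
    also have "\<dots> \<le> \<bar>x - gx\<bar> + (real c + 1) * \<bar>y - gy\<bar>"
      using that Lip_nonneg by (intro mult_left_le_one_le) auto
    finally show ?thesis
      using dist by linarith
  qed
  define u u' w where "u = a x y p - a gx gy p" and "u' = a' x y p - a' gx gy p"
    and "w = grid_value K a (p, i, j) - grid_value K a' (p, i, j)"
  have eq: "a x y p - a' x y p - (if p = 0 then a 0 0 0 - a' 0 0 0 else 0) = u - u' + w"
    unfolding u_def u'_def w_def gx_def gy_def by (simp add: grid_value_def)
  have "cmod (u - u' + w) \<le> cmod u + cmod u' + cmod w"
    using norm_triangle_ineq[of "u - u'" w] norm_triangle_ineq4[of u u'] by linarith
  also have "\<dots> \<le> (real c + 2) / real K + (real c + 2) / real K + 1 / real K"
    unfolding u_def u'_def w_def by (intro add_mono osc[OF a] osc[OF a'] close i(1) j(1))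
  also have "\<dots> = (2 * real c + 5) / real K"
    using K by (simp add: field_simps)
  finally show ?thesis
    unfolding eq .
qed

lemma has_sum_indicator_const:
  assumes "finite F"
  shows "((\<lambda>p. if p \<in> F then C else 0) has_sum (real (card F) * C)) UNIV"
proof -
  have "((\<lambda>_. C) has_sum (real (card F) * C)) F"
    using assms by (intro has_sum_finiteI) simp_all
  then show ?thesis
    by (subst has_sum_cong_neutral[where T=F and g="\<lambda>_. C"]) auto
qed

lemma norm_ii1_le_of_finite_slices:
  assumes "decay b" and "finite F" and "0 \<le> C"
    and "\<And>x y p. p \<in> F \<Longrightarrow> cmod (b x y p) \<le> C"
    and "\<And>x y p. p \<notin> F \<Longrightarrow> cmod (b x y p) \<le> T p"
    and "T summable_on UNIV" and "\<And>p. 0 \<le> T p"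
  shows "norm_ii1 b \<le> real (card F) * C + (\<Sum>\<^sub>\<infinity>p. T p)"
proof -
  have total: "((\<lambda>p. (if p \<in> F then C else 0) + T p) has_sum (real (card F) * C + (\<Sum>\<^sub>\<infinity>p. T p))) UNIV"
    by (rule has_sum_add[OF has_sum_indicator_const[OF assms(2)] has_sum_infsum[OF assms(6)]])
  have "norm_ii1 b \<le> (\<Sum>\<^sub>\<infinity>p. (if p \<in> F then C else 0) + T p)"
  proof (rule norm_ii1_le_infsum[OF assms(1)])
    show "(\<lambda>p. (if p \<in> F then C else 0) + T p) summable_on UNIV"
      using total by (auto simp: summable_on_def)
    show "cmod (b x y p) \<le> (if p \<in> F then C else 0) + T p" for x y p
      using assms(4)[of p x y] assms(5)[of p x y] assms(7)[of p] assms(3) by (cases "p \<in> F") auto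
  qed
  also have "\<dots> = real (card F) * C + (\<Sum>\<^sub>\<infinity>p. T p)"
    by (rule infsumI[OF total])
  finally show ?thesis .
qed

lemma norm_le_slice_sup_delta3_of_large_index:
  assumes "a \<in> Sc c" and "int N < \<bar>p\<bar>"
  shows "real N * cmod (a x y p) \<le> slice_sup (delta3 a) p"
proof -
  have "real N \<le> \<bar>real_of_int p\<bar>"
    using assms(2) by linarith
  then have "real N * cmod (a x y p) \<le> \<bar>real_of_int p\<bar> * cmod (a x y p)"
    by (rule mult_right_mono) simp
  also have "\<dots> \<le> slice_sup (delta3 a) p"
    by (rule abs_mult_norm_le_slice_sup_delta3[OF assms(1)])
  finally show ?thesis .
qed

lemma grid_close_imp_slice_small:
  assumes a: "a \<in> Asa c" "Lip c a \<le> 1" and a': "a' \<in> Asa c" "Lip c a' \<le> 1" and K: "0 < K"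
    and close: "\<And>i j. i \<le> K \<Longrightarrow> j \<le> K \<Longrightarrow>
      cmod (grid_value K a (p, i, j) - grid_value K a' (p, i, j)) \<le> 1 / real K"
  shows "cmod (a x y p - a' x y p - complex_of_real (Re (a 0 0 0 - a' 0 0 0)) * unitI x y p)
    \<le> (2 * real c + 5) / real K"
proof -
  have aS: "a \<in> Sc c" and a'S: "a' \<in> Sc c"
    using a a' by (simp_all add: Asa_def)
  have "(\<lambda>x y p. a x y p - a' x y p - complex_of_real (Re (a 0 0 0 - a' 0 0 0)) * unitI x y p) \<in> Sc c"
    using Asa_diff_real_unitI[OF a(1) a'(1)] unfolding Asa_def by blast
  note periodic = Sc_modulus_periodic[OF this]
  have R: "complex_of_real (Re (a 0 0 0 - a' 0 0 0)) = a 0 0 0 - a' 0 0 0"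
    using Asa_Im_slice0[OF a(1)] Asa_Im_slice0[OF a'(1)] by (simp add: complex_eq_iff)
  show ?thesis
  proof (rule modulus_periodic_bound[OF periodic])
    fix x y :: real
    assume "x \<in> {0..1}" "y \<in> {0..1}"
    from R have "a x y p - a' x y p - complex_of_real (Re (a 0 0 0 - a' 0 0 0)) * unitI x y p
        = a x y p - a' x y p - (if p = 0 then a 0 0 0 - a' 0 0 0 else 0)"
      by (simp add: unitI_def)
    then show "cmod (a x y p - a' x y p - complex_of_real (Re (a 0 0 0 - a' 0 0 0)) * unitI x y p)
        \<le> (2 * real c + 5) / real K"
      using slice_diff_small_on_square[OF aS a(2) a'S a'(2) K close \<open>x \<in> {0..1}\<close> \<open>y \<in> {0..1}\<close>]
      by simp
  qed
qed

lemma norm_ii1_diff_le_of_grid_close: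
  assumes a: "a \<in> Asa c" "Lip c a \<le> 1" and a': "a' \<in> Asa c" "Lip c a' \<le> 1"
    and N: "0 < N" and K: "0 < K"
    and close: "\<And>p i j. \<bar>p\<bar> \<le> int N \<Longrightarrow> i \<le> K \<Longrightarrow> j \<le> K \<Longrightarrow>
      cmod (grid_value K a (p, i, j) - grid_value K a' (p, i, j)) \<le> 1 / real K"
  shows "norm_ii1 (\<lambda>x y p. a x y p - a' x y p - complex_of_real (Re (a 0 0 0 - a' 0 0 0)) * unitI x y p)
    \<le> real (2 * N + 1) * ((2 * real c + 5) / real K) + 2 / real N"
proof -
  define b where "b = (\<lambda>x y p. a x y p - a' x y p - complex_of_real (Re (a 0 0 0 - a' 0 0 0)) * unitI x y p)"
  define tail where "tail p = (slice_sup (delta3 a) p + slice_sup (delta3 a') p) * inverse (real N)" for p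
  have aS: "a \<in> Sc c" and a'S: "a' \<in> Sc c"
    using a a' by (simp_all add: Asa_def)
  have bS: "b \<in> Sc c"
    using Asa_diff_real_unitI[OF a(1) a'(1)] unfolding b_def Asa_def by blast
  have ss: "slice_sup (delta3 f) summable_on UNIV" if "f \<in> Sc c" for f
    by (rule decay_summable_slice_sup[OF delta3_decay[OF that]])
  have "(\<Sum>\<^sub>\<infinity>p. tail p)
      = ((\<Sum>\<^sub>\<infinity>p. slice_sup (delta3 a) p) + (\<Sum>\<^sub>\<infinity>p. slice_sup (delta3 a') p)) * inverse (real N)"
    unfolding tail_def by (simp add: infsum_cmult_left' infsum_add ss[OF aS] ss[OF a'S])
  also have "\<dots> \<le> (1 + 1) * inverse (real N)"
    using infsum_slice_sup_delta3_le_Lip[of a c] infsum_slice_sup_delta3_le_Lip[of a' c] a(2) a'(2)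
    by (intro mult_right_mono add_mono) auto
  finally have tail_sum: "(\<Sum>\<^sub>\<infinity>p. tail p) \<le> 2 / real N"
    by (simp add: divide_inverse)
  have "norm_ii1 b \<le> real (card {- int N..int N}) * ((2 * real c + 5) / real K) + (\<Sum>\<^sub>\<infinity>p. tail p)"
  proof (rule norm_ii1_le_of_finite_slices[OF Sc_decay[OF bS]])
    show "cmod (b x y p) \<le> (2 * real c + 5) / real K" if "p \<in> {- int N..int N}" for x y p
      unfolding b_def using that by (intro grid_close_imp_slice_small[OF a a' K close]) auto
    show "cmod (b x y p) \<le> tail p" if "p \<notin> {- int N..int N}" for x y p
    proof -
      have large: "int N < \<bar>p\<bar>"
        using that by auto
      then have "cmod (b x y p) \<le> cmod (a x y p) + cmod (a' x y p)"
        by (simp add: b_def unitI_def norm_triangle_ineq4)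
      then have "real N * cmod (b x y p) \<le> real N * cmod (a x y p) + real N * cmod (a' x y p)"
        by (simp add: mult_left_mono flip: distrib_left)
      also have "\<dots> \<le> slice_sup (delta3 a) p + slice_sup (delta3 a') p"
        by (intro add_mono norm_le_slice_sup_delta3_of_large_index[OF aS large]
            norm_le_slice_sup_delta3_of_large_index[OF a'S large])
      finally show ?thesis
        using N by (simp add: tail_def field_simps)
    qed
    show "tail summable_on UNIV"
      unfolding tail_def by (intro summable_on_cmult_left summable_on_add ss[OF aS] ss[OF a'S])
    show "0 \<le> tail p" for p
      using decay_slice_sup_nonneg[OF delta3_decay[OF aS]] decay_slice_sup_nonneg[OF delta3_decay[OF a'S]]
      by (simp add: tail_def)
  qed simp_all
  also have "real (card {- int N..int N}) = real (2 * N + 1)"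
    by simp
  finally show ?thesis
    unfolding b_def using tail_sum by linarith
qed

lemma Lip_ball_grid_net:
  assumes "0 < K"
  shows "\<exists>A0\<subseteq>{a \<in> Asa c. Lip c a \<le> 1}. finite A0 \<and> (\<forall>a\<in>Asa c. Lip c a \<le> 1 \<longrightarrow> (\<exists>a'\<in>A0.
    \<forall>p i j. \<bar>p\<bar> \<le> int N \<longrightarrow> i \<le> K \<longrightarrow> j \<le> K \<longrightarrow>
      cmod (grid_value K a (p, i, j) - grid_value K a' (p, i, j)) \<le> 1 / real K))"
proof -
  define X where "X = {a \<in> Asa c. Lip c a \<le> 1}"
  define I where "I = {- int N..int N} \<times> {0..K} \<times> {0..K}"
  have bound: "cmod (grid_value K a \<iota>) \<le> real c + 2" if "a \<in> X" "\<iota> \<in> I" for a \<iota>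
    using that grid_value_bounded by (auto simp: X_def I_def Asa_def)
  obtain A0 where A0: "A0 \<subseteq> X" "finite A0"
    and net: "\<forall>a\<in>X. \<exists>a'\<in>A0. \<forall>\<iota>\<in>I. cmod (grid_value K a \<iota> - grid_value K a' \<iota>) \<le> 1 / real K"
    using bounded_family_finite_net[of I X "grid_value K" "real c + 2" "1 / real K"] bound assms
    by (auto simp: I_def)
  show ?thesis
  proof (intro exI conjI ballI impI)
    show "A0 \<subseteq> {a \<in> Asa c. Lip c a \<le> 1}" and "finite A0"
      using A0 by (simp_all add: X_def)
    fix a
    assume "a \<in> Asa c" "Lip c a \<le> 1"
    then obtain a' where "a' \<in> A0"
      and close: "\<forall>\<iota>\<in>I. cmod (grid_value K a \<iota> - grid_value K a' \<iota>) \<le> 1 / real K"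
      using net by (auto simp: X_def)
    show "\<exists>a'\<in>A0. \<forall>p i j. \<bar>p\<bar> \<le> int N \<longrightarrow> i \<le> K \<longrightarrow> j \<le> K \<longrightarrow>
        cmod (grid_value K a (p, i, j) - grid_value K a' (p, i, j)) \<le> 1 / real K"
      using close by (intro bexI[OF _ \<open>a' \<in> A0\<close>]) (auto simp: I_def abs_le_iff)
  qed
qed

lemma exists_grid_parameters:
  assumes "0 < \<epsilon>" and "0 \<le> C"
  shows "\<exists>N K :: nat. 0 < N \<and> 0 < K \<and> real (2 * N + 1) * (C / real K) + 2 / real N \<le> \<epsilon>"
proof -
  obtain N :: nat where N: "4 / \<epsilon> < real N"
    using reals_Archimedean2 by blast
  have "0 < 4 / \<epsilon>"
    using assms by simp
  then have N0: "0 < real N"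
    using N by linarith
  have "4 < real N * \<epsilon>"
    using N assms by (simp add: pos_divide_less_eq)
  then have N_small: "2 / real N \<le> \<epsilon> / 2"
    using N0 by (simp add: field_simps)
  obtain K :: nat where K: "2 * real (2 * N + 1) * C / \<epsilon> < real K"
    using reals_Archimedean2 by blast
  have "0 \<le> 2 * real (2 * N + 1) * C / \<epsilon>"
    using assms by simp
  then have K0: "0 < real K"
    using K by linarith
  have "2 * real (2 * N + 1) * C < real K * \<epsilon>"
    using K assms by (simp add: pos_divide_less_eq)
  then have "real (2 * N + 1) * (C / real K) \<le> \<epsilon> / 2"
    using K0 by (simp add: field_simps)
  with N_small have "real (2 * N + 1) * (C / real K) + 2 / real N \<le> \<epsilon>"
    by linarith
  with N0 K0 have "0 < N \<and> 0 < K \<and> real (2 * N + 1) * (C / real K) + 2 / real N \<le> \<epsilon>"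
    by simp
  then show ?thesis
    by blast
qed

lemma Lip_ball_finite_net:
  assumes "0 < \<epsilon>"
  shows "\<exists>A0\<subseteq>{a \<in> Asa c. Lip c a \<le> 1}. finite A0 \<and> (\<forall>a\<in>Asa c. Lip c a \<le> 1 \<longrightarrow>
    (\<exists>a'\<in>A0. \<exists>R. norm_ii1 (\<lambda>x y p. a x y p - a' x y p - complex_of_real R * unitI x y p) \<le> \<epsilon>))"
proof -
  obtain N K :: nat where N0: "0 < N" and K0: "0 < K"
    and small: "real (2 * N + 1) * ((2 * real c + 5) / real K) + 2 / real N \<le> \<epsilon>"
    using exists_grid_parameters[OF assms, of "2 * real c + 5"] by fastforce
  obtain A0 where A0: "A0 \<subseteq> {a \<in> Asa c. Lip c a \<le> 1}" "finite A0"
    and net: "\<forall>a\<in>Asa c. Lip c a \<le> 1 \<longrightarrow> (\<exists>a'\<in>A0. \<forall>p i j. \<bar>p\<bar> \<le> int N \<longrightarrow> i \<le> K \<longrightarrow> j \<le> K \<longrightarrow>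
      cmod (grid_value K a (p, i, j) - grid_value K a' (p, i, j)) \<le> 1 / real K)"
    using Lip_ball_grid_net[OF K0, of c N] by auto
  show ?thesis
  proof (intro exI conjI ballI impI)
    show "A0 \<subseteq> {a \<in> Asa c. Lip c a \<le> 1}" and "finite A0"
      using A0 by simp_all
    fix a
    assume a: "a \<in> Asa c" "Lip c a \<le> 1"
    then obtain a' where "a' \<in> A0" and close: "\<forall>p i j. \<bar>p\<bar> \<le> int N \<longrightarrow> i \<le> K \<longrightarrow> j \<le> K \<longrightarrow>
        cmod (grid_value K a (p, i, j) - grid_value K a' (p, i, j)) \<le> 1 / real K"
      using net by blast
    then have a': "a' \<in> Asa c" "Lip c a' \<le> 1"
      using A0 by auto
    have "norm_ii1 (\<lambda>x y p. a x y p - a' x y p - complex_of_real (Re (a 0 0 0 - a' 0 0 0)) * unitI x y p)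
        \<le> real (2 * N + 1) * ((2 * real c + 5) / real K) + 2 / real N"
      using close by (intro norm_ii1_diff_le_of_grid_close[OF a a' N0 K0]) auto
    also have "\<dots> \<le> \<epsilon>"
      by (rule small)
    finally show "\<exists>a'\<in>A0. \<exists>R. norm_ii1 (\<lambda>x y p. a x y p - a' x y p - complex_of_real R * unitI x y p) \<le> \<epsilon>"
      using \<open>a' \<in> A0\<close> by blast
  qed
qed

section \<open>The two topologies on the state space\<close>

lemma Lip_scale_le:
  assumes "a \<in> Sc c" and "0 \<le> t"
  shows "Lip c (\<lambda>x y p. complex_of_real t * a x y p) \<le> t * Lip c a"
proof -
  define b where "b = (\<lambda>x y p. complex_of_real t * a x y p)"
  have bS: "b \<in> Sc c"
    unfolding b_def by (rule Sc_scale[OF assms(1)])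
  have "delta1 b x y p = complex_of_real t * delta1 a x y p" for x y p
    using Sc_differentiable_x[OF assms(1), where y=y and p=p and x=x] by (simp add: b_def delta1_def)
  then have "cmod (delta1 b x y p) \<le> t * cmod (delta1 a x y p)" for x y p
    using assms(2) by (simp add: norm_mult)
  then have 1: "norm_ii1 (delta1 b) \<le> t * norm_ii1 (delta1 a)"
    by (rule norm_ii1_scale_le[OF delta1_decay[OF assms(1)] delta1_decay[OF bS] _ assms(2)])
  have "vector_derivative (\<lambda>s. complex_of_real t * a x s p) (at y)
      = complex_of_real t * vector_derivative (\<lambda>s. a x s p) (at y)" for x y p
    using Sc_differentiable_y[OF assms(1), where x=x and p=p and y=y] by simp
  then have "delta2 c b x y p = complex_of_real t * delta2 c a x y p" for x y p
    by (simp add: b_def delta2_def algebra_simps)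
  then have "cmod (delta2 c b x y p) \<le> t * cmod (delta2 c a x y p)" for x y p
    using assms(2) by (simp add: norm_mult)
  then have 2: "norm_ii1 (delta2 c b) \<le> t * norm_ii1 (delta2 c a)"
    by (rule norm_ii1_scale_le[OF delta2_decay[OF assms(1)] delta2_decay[OF bS] _ assms(2)])
  have "cmod (delta3 b x y p) \<le> t * cmod (delta3 a x y p)" for x y p
    using assms(2) by (simp add: b_def norm_delta3 norm_mult)
  then have 3: "norm_ii1 (delta3 b) \<le> t * norm_ii1 (delta3 a)"
    by (rule norm_ii1_scale_le[OF delta3_decay[OF assms(1)] delta3_decay[OF bS] _ assms(2)])
  from 1 2 3 have "Lip c b \<le> max (t * norm_ii1 (delta1 a)) (max (t * norm_ii1 (delta2 c a)) (t * norm_ii1 (delta3 a)))"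
    unfolding Lip_def by (meson max.mono)
  also have "\<dots> = t * Lip c a"
    unfolding Lip_def using assms(2) by (simp add: max_mult_distrib_left)
  finally show ?thesis
    unfolding b_def .
qed

lemma rhoL_ge:
  assumes "a \<in> Asa c" and "Lip c a \<le> 1"
  shows "ereal \<bar>\<omega>1 a - \<omega>2 a\<bar> \<le> rhoL c \<omega>1 \<omega>2"
  unfolding rhoL_def by (rule Sup_upper) (use assms in blast)

lemma state_diff_less_of_rhoL_less:
  assumes \<omega>: "\<omega> \<in> states c hb mu nu" and \<omega>': "\<omega>' \<in> states c hb mu nu" and a: "a \<in> Asa c"
    and "rhoL c \<omega> \<omega>' < ereal \<epsilon>"
  shows "\<bar>\<omega> a - \<omega>' a\<bar> < (Lip c a + 1) * \<epsilon>"
proof -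
  have L0: "0 \<le> Lip c a"
    using a by (simp add: Asa_def Lip_nonneg)
  define t where "t = 1 / (Lip c a + 1)"
  have t: "0 < t"
    using L0 by (simp add: t_def)
  have "Lip c (\<lambda>x y p. complex_of_real t * a x y p) \<le> t * Lip c a"
    using a t by (intro Lip_scale_le) (simp_all add: Asa_def)
  also have "\<dots> \<le> 1"
    using L0 by (simp add: t_def)
  finally have "ereal \<bar>\<omega> (\<lambda>x y p. complex_of_real t * a x y p) - \<omega>' (\<lambda>x y p. complex_of_real t * a x y p)\<bar>
      < ereal \<epsilon>"
    using rhoL_ge[OF Asa_scale[OF a]] assms(4) by (blast intro: order.strict_trans1)
  then have "t * \<bar>\<omega> a - \<omega>' a\<bar> < \<epsilon>"
    using t by (simp add: state_scale[OF \<omega> a] state_scale[OF \<omega>' a] abs_mult flip: right_diff_distrib)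
  then show ?thesis
    using L0 by (simp add: t_def field_simps)
qed

lemma rhoL_le_of_close_on_net:
  assumes "0 < \<epsilon>"
  obtains A0 where "finite A0" and "A0 \<subseteq> Asa c"
    and "\<And>\<omega> \<omega>'. \<omega> \<in> states c hb mu nu \<Longrightarrow> \<omega>' \<in> states c hb mu nu \<Longrightarrow>
      (\<forall>a\<in>A0. \<bar>\<omega> a - \<omega>' a\<bar> < \<epsilon>) \<Longrightarrow> rhoL c \<omega> \<omega>' \<le> ereal (3 * \<epsilon>)"
proof -
  obtain A0 where A0: "A0 \<subseteq> {a \<in> Asa c. Lip c a \<le> 1}" "finite A0"
    and net: "\<forall>a\<in>Asa c. Lip c a \<le> 1 \<longrightarrow>
      (\<exists>a'\<in>A0. \<exists>R. norm_ii1 (\<lambda>x y p. a x y p - a' x y p - complex_of_real R * unitI x y p) \<le> \<epsilon>)"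
    using Lip_ball_finite_net[OF assms, of c] by blast
  show thesis
  proof (rule that)
    show "finite A0" and "A0 \<subseteq> Asa c"
      using A0 by auto
    fix \<omega> \<omega>'
    assume \<omega>: "\<omega> \<in> states c hb mu nu" and \<omega>': "\<omega>' \<in> states c hb mu nu"
      and close: "\<forall>a\<in>A0. \<bar>\<omega> a - \<omega>' a\<bar> < \<epsilon>"
    show "rhoL c \<omega> \<omega>' \<le> ereal (3 * \<epsilon>)"
      unfolding rhoL_def
    proof (rule Sup_least)
      fix r
      assume "r \<in> {ereal \<bar>\<omega> a - \<omega>' a\<bar> | a. a \<in> Asa c \<and> Lip c a \<le> 1}"
      then obtain a where r: "r = ereal \<bar>\<omega> a - \<omega>' a\<bar>" and a: "a \<in> Asa c" "Lip c a \<le> 1"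
        by blast
      then obtain a' R where "a' \<in> A0"
        and small: "norm_ii1 (\<lambda>x y p. a x y p - a' x y p - complex_of_real R * unitI x y p) \<le> \<epsilon>"
        using net by blast
      then have a': "a' \<in> Asa c"
        using A0 by auto
      have b: "(\<lambda>x y p. a x y p - a' x y p - complex_of_real R * unitI x y p) \<in> Asa c"
        by (rule Asa_diff_real_unitI[OF a(1) a'])
      have "\<bar>\<omega> a - \<omega>' a\<bar> \<le> 3 * \<epsilon>"
        using state_decompose[OF \<omega> a(1) a', of R] state_decompose[OF \<omega>' a(1) a', of R]
          state_abs_le_norm_ii1[OF \<omega> b] state_abs_le_norm_ii1[OF \<omega>' b] small close \<open>a' \<in> A0\<close>
        by fastforce
      then show "r \<le> ereal (3 * \<epsilon>)"
        using r by simp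
    qed
  qed
qed

lemma weakstar_openin_subset: "openin (weakstar c hb mu nu) U \<Longrightarrow> U \<subseteq> states c hb mu nu"
  unfolding weakstar_def openin_subtopology by blast

lemma rhoL_small_imp_close_on_finite:
  assumes "finite F" and "F \<subseteq> Asa c" and "\<And>i. i \<in> F \<Longrightarrow> 0 < e i"
  shows "\<exists>\<epsilon>>0. \<forall>\<omega>\<in>states c hb mu nu. \<forall>\<omega>'\<in>states c hb mu nu.
    rhoL c \<omega> \<omega>' < ereal \<epsilon> \<longrightarrow> (\<forall>i\<in>F. \<bar>\<omega> i - \<omega>' i\<bar> < e i)"
proof -
  define \<epsilon> where "\<epsilon> = Min (insert 1 ((\<lambda>i. e i / (Lip c i + 1)) ` F))"
  have Lip0: "0 \<le> Lip c i" if "i \<in> F" for i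
    using that assms(2) Lip_nonneg by (auto simp: Asa_def)
  have "0 < e i / (Lip c i + 1)" if "i \<in> F" for i
    using assms(3)[OF that] Lip0[OF that] by (intro divide_pos_pos) auto
  then have "0 < \<epsilon>"
    unfolding \<epsilon>_def using assms(1) by (auto simp: Min_gr_iff)
  moreover have "\<bar>\<omega> i - \<omega>' i\<bar> < e i"
    if "\<omega> \<in> states c hb mu nu" "\<omega>' \<in> states c hb mu nu" "rhoL c \<omega> \<omega>' < ereal \<epsilon>" "i \<in> F"
    for \<omega> \<omega>' i
  proof -
    have "\<epsilon> \<le> e i / (Lip c i + 1)"
      unfolding \<epsilon>_def using assms(1) that(4) by (intro Min_le) auto
    then have "(Lip c i + 1) * \<epsilon> \<le> e i"
      using Lip0[OF that(4)] by (simp add: field_simps)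
    moreover have "\<bar>\<omega> i - \<omega>' i\<bar> < (Lip c i + 1) * \<epsilon>"
      using that assms(2) by (intro state_diff_less_of_rhoL_less) auto
    ultimately show ?thesis
      by linarith
  qed
  ultimately show ?thesis
    by blast
qed

lemma weakstar_open_imp_rhoL_open:
  assumes "openin (weakstar c hb mu nu) U" and "\<omega> \<in> U"
  shows "\<exists>\<epsilon>>0. \<forall>\<omega>'\<in>states c hb mu nu. rhoL c \<omega> \<omega>' < ereal \<epsilon> \<longrightarrow> \<omega>' \<in> U"
proof -
  obtain V where V: "openin (product_topology (\<lambda>_. euclideanreal) UNIV) V"
    and U: "U = V \<inter> states c hb mu nu"
    using assms(1) unfolding weakstar_def openin_subtopology by blast
  have \<omega>: "\<omega> \<in> states c hb mu nu"
    using assms(2) U by blast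
  obtain W where "finite {i \<in> UNIV. W i \<noteq> topspace euclideanreal}"
    and W_open: "\<forall>i\<in>UNIV. openin euclideanreal (W i)" and \<omega>W: "\<omega> \<in> Pi\<^sub>E UNIV W"
    and WV: "Pi\<^sub>E UNIV W \<subseteq> V"
    using V assms(2) U unfolding openin_product_topology_alt by blast
  define F where "F = {i. W i \<noteq> UNIV} \<inter> Asa c"
  have F: "finite F"
    using \<open>finite {i \<in> UNIV. W i \<noteq> topspace euclideanreal}\<close> by (simp add: F_def)
  have "\<exists>e>0. ball (\<omega> i) e \<subseteq> W i" for i
  proof -
    have "\<omega> i \<in> W i"
      using \<omega>W by (auto simp: PiE_def)
    then show ?thesis
      using W_open open_contains_ball by auto
  qed
  then obtain e where e: "\<And>i. 0 < e i \<and> ball (\<omega> i) (e i) \<subseteq> W i"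
    by metis
  obtain \<epsilon> where "0 < \<epsilon>" and close: "\<forall>\<omega>1\<in>states c hb mu nu. \<forall>\<omega>2\<in>states c hb mu nu.
      rhoL c \<omega>1 \<omega>2 < ereal \<epsilon> \<longrightarrow> (\<forall>i\<in>F. \<bar>\<omega>1 i - \<omega>2 i\<bar> < e i)"
    using rhoL_small_imp_close_on_finite[OF F, of c e hb mu nu] e by (auto simp: F_def)
  show ?thesis
  proof (intro exI conjI ballI impI)
    show "0 < \<epsilon>"
      by fact
    fix \<omega>'
    assume \<omega>': "\<omega>' \<in> states c hb mu nu" and rho: "rhoL c \<omega> \<omega>' < ereal \<epsilon>"
    have "\<omega>' i \<in> W i" for i
    proof (cases "i \<in> F")
      case True
      then have "\<omega>' i \<in> ball (\<omega> i) (e i)"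
        using close \<omega> \<omega>' rho by (auto simp: dist_real_def)
      then show ?thesis
        using e by blast
    next
      case False
      then consider "W i = UNIV" | "i \<notin> Asa c"
        by (auto simp: F_def)
      then show ?thesis
      proof cases
        case 2
        then have "\<omega>' i = \<omega> i"
          using state_extensional[OF \<omega>] state_extensional[OF \<omega>'] by (simp add: extensional_def)
        then show ?thesis
          using \<omega>W by (auto simp: PiE_def)
      qed simp
    qed
    then show "\<omega>' \<in> U"
      using WV \<omega>' U by (auto simp: PiE_def)
  qed
qed

lemma rhoL_open_imp_weakstar_open:
  assumes "U \<subseteq> states c hb mu nu"
    and "\<forall>\<omega>\<in>U. \<exists>\<epsilon>>0. \<forall>\<omega>'\<in>states c hb mu nu. rhoL c \<omega> \<omega>' < ereal \<epsilon> \<longrightarrow> \<omega>' \<in> U"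
  shows "openin (weakstar c hb mu nu) U"
  unfolding openin_subopen[of _ U]
proof
  fix \<omega>
  assume "\<omega> \<in> U"
  then obtain \<epsilon> where \<epsilon>: "0 < \<epsilon>"
    and ball: "\<forall>\<omega>'\<in>states c hb mu nu. rhoL c \<omega> \<omega>' < ereal \<epsilon> \<longrightarrow> \<omega>' \<in> U"
    using assms(2) by blast
  obtain A0 where "finite A0" and "A0 \<subseteq> Asa c"
    and net: "\<And>\<omega> \<omega>'. \<omega> \<in> states c hb mu nu \<Longrightarrow> \<omega>' \<in> states c hb mu nu \<Longrightarrow>
      (\<forall>a\<in>A0. \<bar>\<omega> a - \<omega>' a\<bar> < \<epsilon> / 4) \<Longrightarrow> rhoL c \<omega> \<omega>' \<le> ereal (3 * (\<epsilon> / 4))"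
    using rhoL_le_of_close_on_net[of "\<epsilon> / 4" c hb mu nu] \<epsilon> by auto
  define W where "W = Pi\<^sub>E UNIV (\<lambda>i. if i \<in> A0 then ball (\<omega> i) (\<epsilon> / 4) else UNIV) \<inter> states c hb mu nu"
  have "openin (product_topology (\<lambda>_. euclideanreal) UNIV)
      (Pi\<^sub>E UNIV (\<lambda>i. if i \<in> A0 then ball (\<omega> i) (\<epsilon> / 4) else UNIV))"
    using \<open>finite A0\<close> by (subst openin_PiE_gen) (auto intro: finite_subset[of _ A0])
  then have "openin (weakstar c hb mu nu) W"
    unfolding weakstar_def W_def openin_subtopology by blast
  moreover have "\<omega> \<in> W"
    using \<open>\<omega> \<in> U\<close> assms(1) \<epsilon> by (auto simp: W_def PiE_def)
  moreover have "W \<subseteq> U"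
  proof
    fix \<omega>'
    assume "\<omega>' \<in> W"
    then have \<omega>': "\<omega>' \<in> states c hb mu nu" and "\<forall>a\<in>A0. \<bar>\<omega> a - \<omega>' a\<bar> < \<epsilon> / 4"
      by (auto simp: W_def PiE_def Pi_def dist_real_def split: if_splits)
    then have "rhoL c \<omega> \<omega>' \<le> ereal (3 * (\<epsilon> / 4))"
      using net \<open>\<omega> \<in> U\<close> assms(1) by blast
    also have "\<dots> < ereal \<epsilon>"
      using \<epsilon> by simp
    finally show "\<omega>' \<in> U"
      using ball \<omega>' by blast
  qed
  ultimately show "\<exists>T. openin (weakstar c hb mu nu) T \<and> \<omega> \<in> T \<and> T \<subseteq> U"
    by blast
qed

theorem mainTheorem3:
  fixes c :: nat and hb mu nu :: real
  assumes "c > 0" and "mu\<^sup>2 + nu\<^sup>2 \<noteq> 0"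
  shows "(\<forall>\<phi>\<in>Asa c. Lip c \<phi> = 0 \<longleftrightarrow> (\<exists>r::real. \<phi> = (\<lambda>x y p. complex_of_real r * unitI x y p)))
       \<and> (\<forall>U. openin (weakstar c hb mu nu) U \<longleftrightarrow>
              (U \<subseteq> states c hb mu nu \<and>
               (\<forall>\<omega>\<in>U. \<exists>\<epsilon>>0. \<forall>\<omega>'\<in>states c hb mu nu. rhoL c \<omega> \<omega>' < ereal \<epsilon> \<longrightarrow> \<omega>' \<in> U)))"
proof (intro conjI allI)
  show "\<forall>\<phi>\<in>Asa c. Lip c \<phi> = 0 \<longleftrightarrow> (\<exists>r::real. \<phi> = (\<lambda>x y p. complex_of_real r * unitI x y p))"
    using Lip_eq_0_iff by blast
  fix U
  show "openin (weakstar c hb mu nu) U \<longleftrightarrow> U \<subseteq> states c hb mu nu \<and>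
      (\<forall>\<omega>\<in>U. \<exists>\<epsilon>>0. \<forall>\<omega>'\<in>states c hb mu nu. rhoL c \<omega> \<omega>' < ereal \<epsilon> \<longrightarrow> \<omega>' \<in> U)"
    using weakstar_openin_subset[of c hb mu nu U] weakstar_open_imp_rhoL_open[of c hb mu nu U]
      rhoL_open_imp_weakstar_open[of U c hb mu nu]
    by blast
qed

end
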